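(* Let $P$ be an $\omega$-polygraph and $u,v_1,v_2$ cells of the free $\omega$-precategory $P^*$ such that, for some $i$, both composites $u\ast_iv_1$ and $u\ast_iv_2$ are defined and $u\ast_iv_1=u\ast_iv_2$. Then $v_1=v_2$.
   Context: An $\omega$-precategory is an $\omega$-globular set (sets $C_k$ with sources/targets $s_i,t_i\colon C_{i+1}\to C_i$ satisfying globular identities) with identities $1_u$ and compositions $u\ast_iv\in C_{\max(k,l)}$ for $u\in C_k$, $v\in C_l$, $i=\min(k,l)-1$, $t_i(u)=s_i(v)$, satisfying the axioms of strict $\omega$-categories for sources/targets, units, associativity and distributivity of lower-dimensional over higher-dimensional composition, but not the interchange law. An $\omega$-polygraph $P$ consists of sets $P_k$ of $k$-generators with globular sources and targets in the free precategory on the lower-dimensional generators; $P^*$ is the free $\omega$-precategory generated by $P$ (each generator adjoined as a cell from its source to its target). *)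

theory Defs
  imports Main
begin

text \<open>
  The free omega-precategory P* on an omega-polygraph P is presented by generators
  and relations: cells are (equivalence classes of) well-formed formal terms built
  from the generators, identities and compositions, modulo the congruence generated
  by the axioms of omega-precategories.  The source/target operations are computed
  structurally on terms, so the source/target axioms hold by construction.
\<close>

datatype 'g pterm = Gen 'g | Idt "'g pterm" | Cmp nat "'g pterm" "'g pterm"

record 'g polygraph =
  gdim :: "'g \<Rightarrow> nat"
  gsrc :: "'g \<Rightarrow> 'g pterm"
  gtgt :: "'g \<Rightarrow> 'g pterm"

fun pdim :: "('g, 'x) polygraph_scheme \<Rightarrow> 'g pterm \<Rightarrow> nat" where
  "pdim P (Gen g) = gdim P g"
| "pdim P (Idt u) = Suc (pdim P u)"
| "pdim P (Cmp i u v) = max (pdim P u) (pdim P v)"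

text \<open>Immediate (codimension one) source (b = False) or target (b = True):
  for a cell x of dimension n+1 this is s_n(x) resp. t_n(x).\<close>
fun pbd :: "('g, 'x) polygraph_scheme \<Rightarrow> bool \<Rightarrow> 'g pterm \<Rightarrow> 'g pterm" where
  "pbd P b (Gen g) = (if b then gtgt P g else gsrc P g)"
| "pbd P b (Idt u) = u"
| "pbd P b (Cmp i u v) =
     (if pdim P u = pdim P v then (if b then pbd P b v else pbd P b u)
      else Cmp i (if pdim P u = max (pdim P u) (pdim P v) then pbd P b u else u)
                 (if pdim P v = max (pdim P u) (pdim P v) then pbd P b v else v))"

definition psrc :: "('g, 'x) polygraph_scheme \<Rightarrow> nat \<Rightarrow> 'g pterm \<Rightarrow> 'g pterm" where
  "psrc P j x = (pbd P False ^^ (pdim P x - j)) x"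

definition ptgt :: "('g, 'x) polygraph_scheme \<Rightarrow> nat \<Rightarrow> 'g pterm \<Rightarrow> 'g pterm" where
  "ptgt P j x = (pbd P True ^^ (pdim P x - j)) x"

text \<open>pceq P x y: x and y are well-formed terms denoting the same cell of P*.
  Composition u *_i v of a k-cell and an l-cell is only formed for
  i = min k l - 1 and t_i(u) = s_i(v).\<close>
inductive pceq :: "('g, 'x) polygraph_scheme \<Rightarrow> 'g pterm \<Rightarrow> 'g pterm \<Rightarrow> bool"
  for P :: "('g, 'x) polygraph_scheme" where
  gen: "pceq P (Gen g) (Gen g)"
| idt: "pceq P u u' \<Longrightarrow> pceq P (Idt u) (Idt u')"
| cmp: "pceq P u u' \<Longrightarrow> pceq P v v' \<Longrightarrow> 0 < pdim P u \<Longrightarrow> 0 < pdim P v \<Longrightarrow>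
        i = min (pdim P u) (pdim P v) - 1 \<Longrightarrow> pceq P (ptgt P i u) (psrc P i v) \<Longrightarrow>
        pceq P (Cmp i u v) (Cmp i u' v')"
| sym: "pceq P x y \<Longrightarrow> pceq P y x"
| trans: "pceq P x y \<Longrightarrow> pceq P y z \<Longrightarrow> pceq P x z"
| unit_l: "pceq P u u \<Longrightarrow> i < pdim P u \<Longrightarrow>
        pceq P (Cmp i (Idt (psrc P i u)) u) (Cmp i (Idt (psrc P i u)) u) \<Longrightarrow>
        pceq P (Cmp i (Idt (psrc P i u)) u) u"
| unit_r: "pceq P u u \<Longrightarrow> i < pdim P u \<Longrightarrow>
        pceq P (Cmp i u (Idt (ptgt P i u))) (Cmp i u (Idt (ptgt P i u))) \<Longrightarrow>
        pceq P (Cmp i u (Idt (ptgt P i u))) u"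
| assoc: "pceq P (Cmp i (Cmp i u v) w) (Cmp i (Cmp i u v) w) \<Longrightarrow>
        pceq P (Cmp i u (Cmp i v w)) (Cmp i u (Cmp i v w)) \<Longrightarrow>
        pceq P (Cmp i (Cmp i u v) w) (Cmp i u (Cmp i v w))"
| dist_l: "i < j \<Longrightarrow> pceq P (Cmp i u (Cmp j v w)) (Cmp i u (Cmp j v w)) \<Longrightarrow>
        pceq P (Cmp j (Cmp i u v) (Cmp i u w)) (Cmp j (Cmp i u v) (Cmp i u w)) \<Longrightarrow>
        pceq P (Cmp i u (Cmp j v w)) (Cmp j (Cmp i u v) (Cmp i u w))"
| dist_r: "i < j \<Longrightarrow> pceq P (Cmp i (Cmp j v w) u) (Cmp i (Cmp j v w) u) \<Longrightarrow>
        pceq P (Cmp j (Cmp i v u) (Cmp i w u)) (Cmp j (Cmp i v u) (Cmp i w u)) \<Longrightarrow>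
        pceq P (Cmp i (Cmp j v w) u) (Cmp j (Cmp i v u) (Cmp i w u))"
| id_l: "pceq P (Cmp i u (Idt v)) (Cmp i u (Idt v)) \<Longrightarrow>
        pceq P (Idt (Cmp i u v)) (Idt (Cmp i u v)) \<Longrightarrow>
        pceq P (Cmp i u (Idt v)) (Idt (Cmp i u v))"
| id_r: "pceq P (Cmp i (Idt v) u) (Cmp i (Idt v) u) \<Longrightarrow>
        pceq P (Idt (Cmp i v u)) (Idt (Cmp i v u)) \<Longrightarrow>
        pceq P (Cmp i (Idt v) u) (Idt (Cmp i v u))"

definition pcell :: "('g, 'x) polygraph_scheme \<Rightarrow> 'g pterm \<Rightarrow> bool" where
  "pcell P x \<longleftrightarrow> pceq P x x"

text \<open>Polygraph conditions: the source and target of a (k+1)-generator are parallel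
  k-cells of the free precategory (on generators of dimension at most k, which is
  automatic for terms of dimension k).\<close>
definition omega_polygraph :: "('g, 'x) polygraph_scheme \<Rightarrow> bool" where
  "omega_polygraph P \<longleftrightarrow>
    (\<forall>g. 0 < gdim P g \<longrightarrow>
       pcell P (gsrc P g) \<and> pcell P (gtgt P g) \<and>
       pdim P (gsrc P g) = gdim P g - 1 \<and> pdim P (gtgt P g) = gdim P g - 1 \<and>
       (2 \<le> gdim P g \<longrightarrow>
          pceq P (psrc P (gdim P g - 2) (gsrc P g)) (psrc P (gdim P g - 2) (gtgt P g)) \<and>
          pceq P (ptgt P (gdim P g - 2) (gsrc P g)) (ptgt P (gdim P g - 2) (gtgt P g))))"

end

theory Submission
  imports Defs
begin

text \<open>
  Cells of \<open>P*\<close> are classified by normal forms.  A normal form of dimension \<open>k > 0\<close>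
  is either an identity on a normal form of dimension \<open>k - 1\<close> or a nonempty word of
  whiskered \<open>k\<close>-generators composed in dimension \<open>k - 1\<close>, where a whiskered
  \<open>k\<close>-generator is a \<open>k\<close>-generator composed, at each level \<open>j < k - 1\<close>, on the left
  and on the right with words of whiskered \<open>(j+1)\<close>-generators.  Composition of normal
  forms is concatenation of words in the top dimension and whiskering below it; it is
  associative, unital and distributive, so every rule of \<open>pceq\<close> preserves the normal
  form.  Conversely, reading a normal form back as a term gives a term equivalent to
  the original one.  Both directions go by induction on the dimension, because
  composability depends on lower-dimensional boundaries.  Hence two cells are equal iff
  their normal forms are, and left cancellation reduces to normal forms: concatenation
  of words cancels, whiskering by a fixed word is injective, and an identity factor is
  determined by the composability condition.
\<close>

section \<open>Whiskered generators\<close>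

text \<open>\<open>Whisk L W R\<close> stands for \<open>L *\<^sub>d W *\<^sub>d R\<close> with \<open>d = depth W\<close>, the words \<open>L\<close> and
  \<open>R\<close> consisting of whiskered \<open>(d+1)\<close>-generators; the outermost layer is the one composed
  in the highest dimension.  \<open>lwhisk a k\<close> and \<open>rwhisk a k\<close> compose with the word \<open>a\<close> of
  whiskered \<open>k\<close>-generators in dimension \<open>k - 1\<close>, distributing over all layers above \<open>k\<close>.\<close>

datatype 'g whisk = WGen 'g | Whisk "'g whisk list" "'g whisk" "'g whisk list"

fun core :: "'g whisk \<Rightarrow> 'g" where
  "core (WGen g) = g" | "core (Whisk L W R) = core W"
fun depth :: "'g whisk \<Rightarrow> nat" where
  "depth (WGen g) = 0" | "depth (Whisk L W R) = Suc (depth W)"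

fun lwhisk :: "'g whisk list \<Rightarrow> nat \<Rightarrow> 'g whisk \<Rightarrow> 'g whisk" where
  "lwhisk a k (WGen g) = WGen g"
| "lwhisk a k (Whisk L W R) = (if Suc (depth W) = k then Whisk (a @ L) W R
      else if k < Suc (depth W) then Whisk (map (lwhisk a k) L) (lwhisk a k W) (map (lwhisk a k) R)
      else Whisk L W R)"

fun rwhisk :: "'g whisk list \<Rightarrow> nat \<Rightarrow> 'g whisk \<Rightarrow> 'g whisk" where
  "rwhisk b k (WGen g) = WGen g"
| "rwhisk b k (Whisk L W R) = (if Suc (depth W) = k then Whisk L W (R @ b)
      else if k < Suc (depth W) then Whisk (map (rwhisk b k) L) (rwhisk b k W) (map (rwhisk b k) R)
      else Whisk L W R)"

fun pad :: "nat \<Rightarrow> 'g whisk \<Rightarrow> 'g whisk" where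
  "pad 0 w = w" | "pad (Suc m) w = Whisk [] (pad m w) []"

lemma lwhisk_Nil[simp]: "lwhisk [] k = (\<lambda>w. w)"
proof
  show "lwhisk [] k w = w" for w by (induction w) (auto intro: map_idI)
qed
lemma rwhisk_Nil[simp]: "rwhisk [] k = (\<lambda>w. w)"
proof
  show "rwhisk [] k w = w" for w by (induction w) (auto intro: map_idI)
qed
lemma depth_lwhisk[simp]: "depth (lwhisk a k w) = depth w"
  by (induction w) auto
lemma depth_rwhisk[simp]: "depth (rwhisk a k w) = depth w"
  by (induction w) auto
lemma core_lwhisk[simp]: "core (lwhisk a k w) = core w"
  by (induction w) auto
lemma core_rwhisk[simp]: "core (rwhisk a k w) = core w"
  by (induction w) auto

lemma lwhisk_app: "lwhisk a k (lwhisk b k w) = lwhisk (a @ b) k w"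
  by (induction w) auto
lemma rwhisk_app: "rwhisk b k (rwhisk a k w) = rwhisk (a @ b) k w"
  by (induction w) auto
lemma lwhisk_rwhisk_same: "lwhisk a k (rwhisk b k w) = rwhisk b k (lwhisk a k w)"
  by (induction w) auto

lemma lwhisk_lwhisk: "m < d \<Longrightarrow> lwhisk a m (lwhisk b d w) = lwhisk (map (lwhisk a m) b) d (lwhisk a m w)"
  by (induction w) auto
lemma lwhisk_rwhisk: "m < d \<Longrightarrow> lwhisk a m (rwhisk b d w) = rwhisk (map (lwhisk a m) b) d (lwhisk a m w)"
  by (induction w) auto
lemma rwhisk_lwhisk: "m < d \<Longrightarrow> rwhisk a m (lwhisk b d w) = lwhisk (map (rwhisk a m) b) d (rwhisk a m w)"
  by (induction w) auto
lemma rwhisk_rwhisk: "m < d \<Longrightarrow> rwhisk a m (rwhisk b d w) = rwhisk (map (rwhisk a m) b) d (rwhisk a m w)"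
  by (induction w) auto

lemma depth_pad[simp]: "depth (pad m w) = m + depth w"
  by (induction m) auto
lemma core_pad[simp]: "core (pad m w) = core w"
  by (induction m) auto
lemma pad_Suc_inner: "pad (Suc m) w = pad m (Whisk [] w [])"
  by (induction m) auto
lemma rwhisk_pad: "k \<le> depth X \<Longrightarrow> rwhisk R k (pad m X) = pad m (rwhisk R k X)"
  by (induction m) auto
lemma lwhisk_pad: "k \<le> depth X \<Longrightarrow> lwhisk L k (pad m X) = pad m (lwhisk L k X)"
  by (induction m) auto

lemma map_eq_map_imp_eq:
  "(\<And>x y. x \<in> set xs \<Longrightarrow> f x = f y \<Longrightarrow> x = y) \<Longrightarrow> map f xs = map f ys \<Longrightarrow> xs = ys"
  by (induction xs arbitrary: ys) (auto simp: Cons_eq_map_conv)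

lemma lwhisk_inj: "lwhisk a k w1 = lwhisk a k w2 \<Longrightarrow> w1 = w2"
proof (induction w1 arbitrary: w2)
  case (WGen g) then show ?case by (cases w2) (auto split: if_splits)
next
  case (Whisk L W R)
  show ?case
  proof (cases w2)
    case (WGen g) then show ?thesis using Whisk.prems by (auto split: if_splits)
  next
    case (Whisk L' W' R')
    have "depth (lwhisk a k (Whisk L W R)) = depth (lwhisk a k w2)" using Whisk.prems by simp
    then have "depth (Whisk L W R) = depth w2" by (simp only: depth_lwhisk)
    then have dW: "depth W = depth W'" using \<open>w2 = _\<close> by simp
    show ?thesis
    proof (cases "Suc (depth W) = k")
      case True then show ?thesis using Whisk.prems \<open>w2 = _\<close> dW by simp
    next
      case F: False
      show ?thesis
      proof (cases "k < Suc (depth W)")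
        case True
        then have e: "map (lwhisk a k) L = map (lwhisk a k) L'" "lwhisk a k W = lwhisk a k W'" "map (lwhisk a k) R = map (lwhisk a k) R'"
          using Whisk.prems \<open>w2 = _\<close> dW F by auto
        have "L = L'" by (rule map_eq_map_imp_eq[OF _ e(1)]) (use Whisk.IH(1) in blast)
        moreover have "R = R'" by (rule map_eq_map_imp_eq[OF _ e(3)]) (use Whisk.IH(3) in blast)
        moreover have "W = W'" using Whisk.IH(2) e(2) by blast
        ultimately show ?thesis using \<open>w2 = _\<close> by simp
      next
        case False then show ?thesis using Whisk.prems \<open>w2 = _\<close> dW F by auto
      qed
    qed
  qed
qed

lemma rwhisk_inj_word: "rwhisk b k w = rwhisk b' k w \<Longrightarrow> 1 \<le> k \<Longrightarrow> k \<le> depth w \<Longrightarrow> b = b'"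
proof (induction w)
  case (WGen g) then show ?case by simp
next
  case (Whisk L W R)
  then show ?case by (cases "Suc (depth W) = k") auto
qed

section \<open>Normal forms and their composition\<close>

text \<open>\<open>NWord ws\<close> is the composite of the word \<open>ws\<close> of whiskered \<open>k\<close>-generators in
  dimension \<open>k - 1\<close>.  \<open>ncat\<close> composes normal forms of equal dimension, \<open>nlwhisk\<close> and
  \<open>nrwhisk\<close> compose with a normal form of lower dimension on the left resp. right.\<close>

datatype 'g nform = NGen 'g | NId "'g nform" | NWord "'g whisk list"

fun word :: "'g nform \<Rightarrow> 'g whisk list" where
  "word (NWord ws) = ws" | "word (NId x) = []" | "word (NGen g) = []"

fun ndim :: "('g,'x) polygraph_scheme \<Rightarrow> 'g nform \<Rightarrow> nat" where
  "ndim P (NGen g) = 0"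
| "ndim P (NId x) = Suc (ndim P x)"
| "ndim P (NWord ws) = (case ws of [] \<Rightarrow> 0 | w # _ \<Rightarrow> gdim P (core w))"

fun ncat :: "'g nform \<Rightarrow> 'g nform \<Rightarrow> 'g nform" where
  "ncat (NId x) V = V"
| "ncat (NGen g) V = NGen g"
| "ncat (NWord a) V = (case V of NWord c \<Rightarrow> NWord (a @ c) | NId _ \<Rightarrow> NWord a | NGen g \<Rightarrow> NGen g)"

primrec nlwhisk :: "('g,'x) polygraph_scheme \<Rightarrow> 'g nform \<Rightarrow> 'g nform \<Rightarrow> 'g nform" where
  "nlwhisk P U (NGen g) = NGen g"
| "nlwhisk P U (NId y) = NId (if ndim P y = ndim P U then ncat U y else nlwhisk P U y)"
| "nlwhisk P U (NWord ws) = NWord (map (lwhisk (word U) (ndim P U)) ws)"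

primrec nrwhisk :: "('g,'x) polygraph_scheme \<Rightarrow> 'g nform \<Rightarrow> 'g nform \<Rightarrow> 'g nform" where
  "nrwhisk P (NGen g) V = NGen g"
| "nrwhisk P (NId x) V = NId (if ndim P x = ndim P V then ncat x V else nrwhisk P x V)"
| "nrwhisk P (NWord ws) V = NWord (map (rwhisk (word V) (ndim P V)) ws)"

definition ncomp :: "('g,'x) polygraph_scheme \<Rightarrow> 'g nform \<Rightarrow> 'g nform \<Rightarrow> 'g nform" where
  "ncomp P U V = (if ndim P U = ndim P V then ncat U V
     else if ndim P U < ndim P V then nlwhisk P U V else nrwhisk P U V)"

primrec nf :: "('g,'x) polygraph_scheme \<Rightarrow> 'g pterm \<Rightarrow> 'g nform" where
  "nf P (Gen g) = (if gdim P g = 0 then NGen g else NWord [pad (gdim P g - 1) (WGen g)])"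
| "nf P (Idt u) = NId (nf P u)"
| "nf P (Cmp i u v) = ncomp P (nf P u) (nf P v)"

lemma ndim_NWord_Cons[simp]: "ndim P (NWord (w # ws)) = gdim P (core w)" by simp
lemma ndim_NWord_Nil[simp]: "ndim P (NWord []) = 0" by simp
declare ndim.simps(3)[simp del]

lemma ndim_ncat: "ndim P U = ndim P V \<Longrightarrow> ndim P (ncat U V) = ndim P U"
proof (cases U)
  case (NWord a) then show "ndim P U = ndim P V \<Longrightarrow> ?thesis" by (cases V; cases a) auto
qed auto

lemma ndim_map_lwhisk[simp]: "ndim P (NWord (map (lwhisk a k) ws)) = ndim P (NWord ws)"
  by (cases ws) auto
lemma ndim_map_rwhisk[simp]: "ndim P (NWord (map (rwhisk a k) ws)) = ndim P (NWord ws)"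
  by (cases ws) auto

lemma ndim_nlwhisk: "ndim P U < ndim P V \<Longrightarrow> ndim P (nlwhisk P U V) = ndim P V"
  by (induction V) (auto simp: ndim_ncat)

lemma ndim_nrwhisk: "ndim P V < ndim P U \<Longrightarrow> ndim P (nrwhisk P U V) = ndim P U"
  by (induction U) (auto simp: ndim_ncat)

lemma ndim_ncomp[simp]: "ndim P (ncomp P U V) = max (ndim P U) (ndim P V)"
  by (auto simp: ncomp_def ndim_ncat ndim_nlwhisk ndim_nrwhisk)

lemma word_ncat: "0 < ndim P U \<Longrightarrow> ndim P U = ndim P V \<Longrightarrow> word (ncat U V) = word U @ word V"
  by (cases U; cases V) (auto split: list.splits)

lemma ncat_assoc: "ncat (ncat U V) W = ncat U (ncat V W)"
  by (cases U; cases V; cases W) (auto split: nform.splits)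

lemma nlwhisk_NId[simp]: "nlwhisk P (NId z) V = V"
  by (induction V) (auto intro: map_idI)

lemma ncomp_NId_left: "ndim P z < ndim P V \<Longrightarrow> ncomp P (NId z) V = V"
  by (auto simp: ncomp_def)

lemma ncomp_NId_right_nlwhisk: "ndim P U \<le> ndim P y \<Longrightarrow> ncomp P U (NId y) = NId (ncomp P U y)"
  by (auto simp: ncomp_def)

lemma ncomp_NId_left_nrwhisk: "ndim P V \<le> ndim P x \<Longrightarrow> ncomp P (NId x) V = NId (ncomp P x V)"
  by (auto simp: ncomp_def)

lemma ncomp_NWord_NWord_eq: "ndim P (NWord a) = ndim P (NWord c) \<Longrightarrow> ncomp P (NWord a) (NWord c) = NWord (a @ c)"
  by (auto simp: ncomp_def)

lemma ncomp_NWord_nlwhisk: "ndim P U < ndim P (NWord ws) \<Longrightarrow> ncomp P U (NWord ws) = NWord (map (lwhisk (word U) (ndim P U)) ws)"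
  by (auto simp: ncomp_def)

lemma ncomp_NWord_nrwhisk: "ndim P V < ndim P (NWord ws) \<Longrightarrow> ncomp P (NWord ws) V = NWord (map (rwhisk (word V) (ndim P V)) ws)"
  by (auto simp: ncomp_def)

lemma nlwhisk_ncat: "0 < ndim P U \<Longrightarrow> ndim P U = ndim P V \<Longrightarrow> ndim P U < ndim P W \<Longrightarrow>
   nlwhisk P (ncat U V) W = nlwhisk P U (nlwhisk P V W)"
proof (induction W)
  case (NGen g) then show ?case by simp
next
  case (NId y)
  have d: "ndim P (ncat U V) = ndim P U" using NId.prems by (simp add: ndim_ncat)
  show ?case
  proof (cases "ndim P y = ndim P U")
    case True then show ?thesis using NId.prems d by (simp add: ndim_ncat ncat_assoc)
  next
    case False
    then have "ndim P U < ndim P y" using NId.prems by simp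
    then show ?thesis using NId.prems NId.IH d False by (simp add: ndim_nlwhisk)
  qed
next
  case (NWord ws)
  have "word (ncat U V) = word U @ word V" using NWord.prems by (intro word_ncat) auto
  then show ?case using NWord.prems by (simp add: ndim_ncat lwhisk_app)
qed

lemma nrwhisk_ncat: "0 < ndim P V \<Longrightarrow> ndim P V = ndim P W \<Longrightarrow> ndim P V < ndim P U \<Longrightarrow>
   nrwhisk P (nrwhisk P U V) W = nrwhisk P U (ncat V W)"
proof (induction U)
  case (NGen g) then show ?case by simp
next
  case (NId x)
  have d: "ndim P (ncat V W) = ndim P V" using NId.prems by (simp add: ndim_ncat)
  show ?case
  proof (cases "ndim P x = ndim P V")
    case True then show ?thesis using NId.prems d by (simp add: ndim_ncat ncat_assoc)
  next
    case False
    then have "ndim P V < ndim P x" using NId.prems by simp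
    then show ?thesis using NId.prems NId.IH d False by (simp add: ndim_nrwhisk)
  qed
next
  case (NWord ws)
  have "word (ncat V W) = word V @ word W" using NWord.prems by (intro word_ncat) auto
  then show ?case using NWord.prems by (simp add: ndim_ncat rwhisk_app)
qed

lemma nlwhisk_nrwhisk: "ndim P U = ndim P W \<Longrightarrow> ndim P U < ndim P V \<Longrightarrow>
   nrwhisk P (nlwhisk P U V) W = nlwhisk P U (nrwhisk P V W)"
proof (induction V)
  case (NGen g) then show ?case by simp
next
  case (NId y)
  show ?case
  proof (cases "ndim P y = ndim P U")
    case True then show ?thesis using NId.prems by (simp add: ndim_ncat ncat_assoc)
  next
    case False
    then have "ndim P U < ndim P y" using NId.prems by simp
    then show ?thesis using NId.prems NId.IH False by (simp add: ndim_nlwhisk ndim_nrwhisk)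
  qed
next
  case (NWord ws) then show ?case by (simp add: lwhisk_rwhisk_same)
qed

lemma ncomp_assoc:
  assumes p: "0 < ndim P U" "0 < ndim P V" "0 < ndim P W"
    and c: "(ndim P V \<le> ndim P U \<and> ndim P V \<le> ndim P W \<and> \<not> (ndim P V < ndim P U \<and> ndim P V < ndim P W))
            \<or> (ndim P U = ndim P W \<and> ndim P U < ndim P V)"
  shows "ncomp P (ncomp P U V) W = ncomp P U (ncomp P V W)"
proof -
  consider (A) "ndim P U = ndim P V" "ndim P V = ndim P W"
    | (B) "ndim P U = ndim P V" "ndim P V < ndim P W"
    | (C) "ndim P V = ndim P W" "ndim P V < ndim P U"
    | (D) "ndim P U = ndim P W" "ndim P U < ndim P V"
    using c by linarith
  then show ?thesis
  proof cases
    case A then show ?thesis by (simp add: ncomp_def ndim_ncat ncat_assoc)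
  next
    case B then show ?thesis using p by (simp add: ncomp_def ndim_ncat ndim_nlwhisk nlwhisk_ncat)
  next
    case C then show ?thesis using p by (simp add: ncomp_def ndim_ncat ndim_nrwhisk nrwhisk_ncat)
  next
    case D then show ?thesis using p by (simp add: ncomp_def ndim_nlwhisk ndim_nrwhisk nlwhisk_nrwhisk)
  qed
qed

lemma word_nlwhisk: "word (nlwhisk P U V) = map (lwhisk (word U) (ndim P U)) (word V)"
  by (cases V) auto
lemma word_nrwhisk: "word (nrwhisk P U V) = map (rwhisk (word V) (ndim P V)) (word U)"
  by (cases U) auto

lemma nlwhisk_ncat_dist: "ndim P U < ndim P V \<Longrightarrow> ndim P V = ndim P W \<Longrightarrow>
   nlwhisk P U (ncat V W) = ncat (nlwhisk P U V) (nlwhisk P U W)"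
proof (cases V)
  case (NWord a)
  then show "ndim P U < ndim P V \<Longrightarrow> ndim P V = ndim P W \<Longrightarrow> ?thesis"
    by (cases W) auto
qed auto

lemma nrwhisk_ncat_dist: "ndim P U < ndim P V \<Longrightarrow> ndim P V = ndim P W \<Longrightarrow>
   nrwhisk P (ncat V W) U = ncat (nrwhisk P V U) (nrwhisk P W U)"
proof (cases V)
  case (NWord a)
  then show "ndim P U < ndim P V \<Longrightarrow> ndim P V = ndim P W \<Longrightarrow> ?thesis"
    by (cases W) auto
qed auto

lemma nlwhisk_nlwhisk: "ndim P U < ndim P V \<Longrightarrow> ndim P V < ndim P W \<Longrightarrow>
   nlwhisk P U (nlwhisk P V W) = nlwhisk P (nlwhisk P U V) (nlwhisk P U W)"
proof (induction W)
  case (NGen g) then show ?case by simp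
next
  case (NId z)
  have z: "ndim P V \<le> ndim P z" using NId.prems by simp
  show ?case
  proof (cases "ndim P z = ndim P V")
    case True
    then show ?thesis using NId.prems z by (simp add: ndim_ncat ndim_nlwhisk nlwhisk_ncat_dist)
  next
    case False
    then show ?thesis using NId.prems z NId.IH by (simp add: ndim_ncat ndim_nlwhisk)
  qed
next
  case (NWord ws) then show ?case by (simp add: word_nlwhisk ndim_nlwhisk lwhisk_lwhisk)
qed

lemma nlwhisk_nrwhisk_dist: "ndim P U < ndim P W \<Longrightarrow> ndim P W < ndim P V \<Longrightarrow>
   nlwhisk P U (nrwhisk P V W) = nrwhisk P (nlwhisk P U V) (nlwhisk P U W)"
proof (induction V)
  case (NGen g) then show ?case by simp
next
  case (NId y)
  have y: "ndim P W \<le> ndim P y" using NId.prems by simp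
  show ?case
  proof (cases "ndim P y = ndim P W")
    case True
    then show ?thesis using NId.prems y by (simp add: ndim_ncat ndim_nlwhisk ndim_nrwhisk nlwhisk_ncat_dist)
  next
    case False
    then show ?thesis using NId.prems y NId.IH by (simp add: ndim_ncat ndim_nlwhisk ndim_nrwhisk)
  qed
next
  case (NWord ws) then show ?case by (simp add: word_nlwhisk ndim_nlwhisk lwhisk_rwhisk)
qed

lemma nrwhisk_nlwhisk_dist: "ndim P U < ndim P V \<Longrightarrow> ndim P V < ndim P W \<Longrightarrow>
   nrwhisk P (nlwhisk P V W) U = nlwhisk P (nrwhisk P V U) (nrwhisk P W U)"
proof (induction W)
  case (NGen g) then show ?case by simp
next
  case (NId z)
  have z: "ndim P V \<le> ndim P z" using NId.prems by simp
  show ?case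
  proof (cases "ndim P z = ndim P V")
    case True
    then show ?thesis using NId.prems z by (simp add: ndim_ncat ndim_nlwhisk ndim_nrwhisk nrwhisk_ncat_dist)
  next
    case False
    then show ?thesis using NId.prems z NId.IH by (simp add: ndim_ncat ndim_nlwhisk ndim_nrwhisk)
  qed
next
  case (NWord ws) then show ?case by (simp add: word_nrwhisk ndim_nrwhisk rwhisk_lwhisk)
qed

lemma nrwhisk_nrwhisk_dist: "ndim P U < ndim P W \<Longrightarrow> ndim P W < ndim P V \<Longrightarrow>
   nrwhisk P (nrwhisk P V W) U = nrwhisk P (nrwhisk P V U) (nrwhisk P W U)"
proof (induction V)
  case (NGen g) then show ?case by simp
next
  case (NId y)
  have y: "ndim P W \<le> ndim P y" using NId.prems by simp
  show ?case
  proof (cases "ndim P y = ndim P W")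
    case True
    then show ?thesis using NId.prems y by (simp add: ndim_ncat ndim_nrwhisk nrwhisk_ncat_dist)
  next
    case False
    then show ?thesis using NId.prems y NId.IH by (simp add: ndim_ncat ndim_nrwhisk)
  qed
next
  case (NWord ws) then show ?case by (simp add: word_nrwhisk ndim_nrwhisk rwhisk_rwhisk)
qed

lemma ncomp_distrib_left:
  assumes "ndim P U < ndim P V" "ndim P U < ndim P W"
  shows "ncomp P U (ncomp P V W) = ncomp P (ncomp P U V) (ncomp P U W)"
proof -
  consider "ndim P V = ndim P W" | "ndim P V < ndim P W" | "ndim P W < ndim P V" by linarith
  then show ?thesis
  proof cases
    case 1 then show ?thesis using assms by (simp add: ncomp_def ndim_ncat ndim_nlwhisk nlwhisk_ncat_dist)
  next
    case 2 then show ?thesis using assms by (simp add: ncomp_def ndim_nlwhisk nlwhisk_nlwhisk)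
  next
    case 3 then show ?thesis using assms by (simp add: ncomp_def ndim_nlwhisk ndim_nrwhisk nlwhisk_nrwhisk_dist)
  qed
qed

lemma ncomp_distrib_right:
  assumes "ndim P U < ndim P V" "ndim P U < ndim P W"
  shows "ncomp P (ncomp P V W) U = ncomp P (ncomp P V U) (ncomp P W U)"
proof -
  consider "ndim P V = ndim P W" | "ndim P V < ndim P W" | "ndim P W < ndim P V" by linarith
  then show ?thesis
  proof cases
    case 1 then show ?thesis using assms by (simp add: ncomp_def ndim_ncat ndim_nrwhisk nrwhisk_ncat_dist)
  next
    case 2 then show ?thesis using assms by (simp add: ncomp_def ndim_nlwhisk ndim_nrwhisk nrwhisk_nlwhisk_dist)
  next
    case 3 then show ?thesis using assms by (simp add: ncomp_def ndim_nrwhisk nrwhisk_nrwhisk_dist)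
  qed
qed

fun whisk_ok :: "('g,'x) polygraph_scheme \<Rightarrow> 'g whisk \<Rightarrow> bool" where
  "whisk_ok P (WGen g) = (0 < gdim P g)"
| "whisk_ok P (Whisk L W R) = (whisk_ok P W \<and> Suc (depth W) < gdim P (core W) \<and>
      (\<forall>x \<in> set L \<union> set R. whisk_ok P x \<and> gdim P (core x) = Suc (depth W) \<and> depth x = depth W))"

text \<open>A word of whiskered \<open>k\<close>-generators is composed in dimension \<open>k - 1\<close>, so all its
  layers are present: \<open>Suc (depth x) = k\<close>.\<close>

definition word_ok :: "('g,'x) polygraph_scheme \<Rightarrow> nat \<Rightarrow> 'g whisk list \<Rightarrow> bool" where
  "word_ok P k a \<longleftrightarrow> (\<forall>x\<in>set a. whisk_ok P x \<and> gdim P (core x) = k \<and> Suc (depth x) = k)"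

fun nform_ok :: "('g,'x) polygraph_scheme \<Rightarrow> 'g nform \<Rightarrow> bool" where
  "nform_ok P (NGen g) = (gdim P g = 0)"
| "nform_ok P (NId x) = nform_ok P x"
| "nform_ok P (NWord ws) = (ws \<noteq> [] \<and> word_ok P (ndim P (NWord ws)) ws)"

lemma word_ok_app[simp]: "word_ok P k (a @ b) \<longleftrightarrow> word_ok P k a \<and> word_ok P k b"
  by (auto simp: word_ok_def)

lemma whisk_ok_lwhisk: "whisk_ok P w \<Longrightarrow> word_ok P k a \<Longrightarrow> whisk_ok P (lwhisk a k w)"
  by (induction w) (auto simp: word_ok_def)
lemma whisk_ok_rwhisk: "whisk_ok P w \<Longrightarrow> word_ok P k a \<Longrightarrow> whisk_ok P (rwhisk a k w)"
  by (induction w) (auto simp: word_ok_def)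

lemma word_ok_map_lwhisk: "word_ok P d ws \<Longrightarrow> word_ok P k a \<Longrightarrow> word_ok P d (map (lwhisk a k) ws)"
  by (auto simp: word_ok_def whisk_ok_lwhisk)
lemma word_ok_map_rwhisk: "word_ok P d ws \<Longrightarrow> word_ok P k a \<Longrightarrow> word_ok P d (map (rwhisk a k) ws)"
  by (auto simp: word_ok_def whisk_ok_rwhisk)

lemma word_ok_word: "nform_ok P U \<Longrightarrow> word_ok P (ndim P U) (word U)"
  by (cases U) (auto simp: word_ok_def)

lemma nform_ok_ncat: "nform_ok P U \<Longrightarrow> nform_ok P V \<Longrightarrow> ndim P U = ndim P V \<Longrightarrow> nform_ok P (ncat U V)"
proof (cases U)
  case (NWord a)
  then show "nform_ok P U \<Longrightarrow> nform_ok P V \<Longrightarrow> ndim P U = ndim P V \<Longrightarrow> ?thesis"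
    by (cases V; cases a) (auto simp: word_ok_def)
qed auto

lemma nform_ok_nlwhisk: "nform_ok P U \<Longrightarrow> nform_ok P V \<Longrightarrow> ndim P U < ndim P V \<Longrightarrow> nform_ok P (nlwhisk P U V)"
proof (induction V)
  case (NWord ws)
  have "ws \<noteq> []" "word_ok P (ndim P (NWord ws)) ws" using NWord.prems by auto
  then show ?case using word_ok_map_lwhisk[OF _ word_ok_word[OF NWord.prems(1)]] by simp
qed (auto simp: nform_ok_ncat)

lemma nform_ok_nrwhisk: "nform_ok P U \<Longrightarrow> nform_ok P V \<Longrightarrow> ndim P V < ndim P U \<Longrightarrow> nform_ok P (nrwhisk P U V)"
proof (induction U)
  case (NWord ws)
  have "ws \<noteq> []" "word_ok P (ndim P (NWord ws)) ws" using NWord.prems by auto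
  then show ?case using word_ok_map_rwhisk[OF _ word_ok_word[OF NWord.prems(2)]] by simp
qed (auto simp: nform_ok_ncat)

lemma nform_ok_ncomp: "nform_ok P U \<Longrightarrow> nform_ok P V \<Longrightarrow> nform_ok P (ncomp P U V)"
  by (auto simp: ncomp_def nform_ok_ncat nform_ok_nlwhisk nform_ok_nrwhisk)
lemma whisk_ok_pad: "m < gdim P g \<Longrightarrow> whisk_ok P (pad m (WGen g))"
  by (induction m) auto

lemma nform_ok_nf: "nform_ok P (nf P x)"
  by (induction x) (auto simp: nform_ok_ncomp word_ok_def whisk_ok_pad)

lemma ndim_nf[simp]: "ndim P (nf P x) = pdim P x"
  by (induction x) auto

section \<open>Iterated boundaries of terms\<close>

definition pbdj :: "('g,'x) polygraph_scheme \<Rightarrow> bool \<Rightarrow> nat \<Rightarrow> 'g pterm \<Rightarrow> 'g pterm" where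
  "pbdj P b j x = (pbd P b ^^ (pdim P x - j)) x"

lemma psrc_pbdj: "psrc P j x = pbdj P False j x" by (simp add: psrc_def pbdj_def)
lemma ptgt_pbdj: "ptgt P j x = pbdj P True j x" by (simp add: ptgt_def pbdj_def)

lemma omega_dims:
  assumes "omega_polygraph P" "0 < gdim P g"
  shows "pdim P (gsrc P g) = gdim P g - 1" "pdim P (gtgt P g) = gdim P g - 1"
    "pcell P (gsrc P g)" "pcell P (gtgt P g)"
  using assms by (auto simp: omega_polygraph_def)

lemma pdim_pbd: "omega_polygraph P \<Longrightarrow> 0 < pdim P x \<Longrightarrow> pdim P (pbd P b x) = pdim P x - 1"
  by (induction x) (auto simp: omega_dims)

lemma pdim_pbd_pow: "omega_polygraph P \<Longrightarrow> n \<le> pdim P x \<Longrightarrow> pdim P ((pbd P b ^^ n) x) = pdim P x - n"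
proof (induction n)
  case 0 then show ?case by simp
next
  case (Suc n)
  then show ?case by (auto simp: pdim_pbd)
qed

lemma pdim_pbdj: "omega_polygraph P \<Longrightarrow> pdim P (pbdj P b j x) = min j (pdim P x)"
  by (simp add: pbdj_def pdim_pbd_pow)

lemma pbdj_triv: "pdim P x \<le> j \<Longrightarrow> pbdj P b j x = x"
  by (simp add: pbdj_def)

lemma pbdj_step: "omega_polygraph P \<Longrightarrow> j < pdim P x \<Longrightarrow> pbdj P b j x = pbdj P b j (pbd P b x)"
proof -
  assume o: "omega_polygraph P" and j: "j < pdim P x"
  then have "pdim P x - j = Suc (pdim P (pbd P b x) - j)" by (simp add: pdim_pbd)
  then show ?thesis by (simp add: pbdj_def funpow_Suc_right del: funpow.simps)
qed

definition comp_dims :: "('g,'x) polygraph_scheme \<Rightarrow> nat \<Rightarrow> 'g pterm \<Rightarrow> 'g pterm \<Rightarrow> bool" where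
  "comp_dims P i u v \<longleftrightarrow> 0 < pdim P u \<and> 0 < pdim P v \<and> i = min (pdim P u) (pdim P v) - 1"

lemma pbdj_Cmp_gen:
  assumes o: "omega_polygraph P"
  shows "comp_dims P i u v \<Longrightarrow> max (pdim P u) (pdim P v) - j = n \<Longrightarrow>
    pbdj P b j (Cmp i u v) = (if max (pdim P u) (pdim P v) \<le> j then Cmp i u v
      else if min (pdim P u) (pdim P v) \<le> j then Cmp i (pbdj P b j u) (pbdj P b j v)
      else if b then pbdj P b j v else pbdj P b j u)"
proof (induction n arbitrary: u v)
  case 0 then show ?case by (simp add: pbdj_triv)
next
  case (Suc n)
  have jlt: "j < pdim P (Cmp i u v)" using Suc.prems by simp
  have st: "pbdj P b j (Cmp i u v) = pbdj P b j (pbd P b (Cmp i u v))" using pbdj_step[OF o jlt] .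
  consider "pdim P u = pdim P v" | "pdim P v < pdim P u" | "pdim P u < pdim P v" by linarith
  then show ?case
  proof cases
    case 1
    then show ?thesis using st Suc.prems o by (auto simp: pbdj_step[symmetric])
  next
    case 2
    have pb: "pbd P b (Cmp i u v) = Cmp i (pbd P b u) v" using 2 by simp
    have du: "pdim P (pbd P b u) = pdim P u - 1" using 2 o by (simp add: pdim_pbd)
    have w: "comp_dims P i (pbd P b u) v" using Suc.prems 2 du by (auto simp: comp_dims_def)
    have IH: "pbdj P b j (Cmp i (pbd P b u) v) = (if max (pdim P (pbd P b u)) (pdim P v) \<le> j then Cmp i (pbd P b u) v
      else if min (pdim P (pbd P b u)) (pdim P v) \<le> j then Cmp i (pbdj P b j (pbd P b u)) (pbdj P b j v)
      else if b then pbdj P b j v else pbdj P b j (pbd P b u))"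
      using Suc.IH[OF w] Suc.prems du 2 by simp
    have e1: "j < pdim P u \<Longrightarrow> pbdj P b j (pbd P b u) = pbdj P b j u" using o by (simp add: pbdj_step)
    show ?thesis
    proof (cases "pdim P u - 1 \<le> j")
      case True
      then have "pdim P u - 1 = j" using Suc.prems 2 by simp
      then have "pdim P u - j = Suc 0" using 2 by simp
      then have "pbdj P b j u = pbd P b u"
        by (simp add: pbdj_def)
      moreover have "pdim P v \<le> j" "\<not> pdim P u \<le> j" using True 2 Suc.prems by auto
      ultimately show ?thesis using st pb IH du True 2 Suc.prems by (simp add: pbdj_triv)
    next
      case False
      then show ?thesis using st pb IH du 2 Suc.prems e1 by auto
    qed
  next
    case 3
    have pb: "pbd P b (Cmp i u v) = Cmp i u (pbd P b v)" using 3 by simp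
    have dv: "pdim P (pbd P b v) = pdim P v - 1" using 3 o by (simp add: pdim_pbd)
    have w: "comp_dims P i u (pbd P b v)" using Suc.prems 3 dv by (auto simp: comp_dims_def)
    have IH: "pbdj P b j (Cmp i u (pbd P b v)) = (if max (pdim P u) (pdim P (pbd P b v)) \<le> j then Cmp i u (pbd P b v)
      else if min (pdim P u) (pdim P (pbd P b v)) \<le> j then Cmp i (pbdj P b j u) (pbdj P b j (pbd P b v))
      else if b then pbdj P b j (pbd P b v) else pbdj P b j u)"
      using Suc.IH[OF w] Suc.prems dv 3 by simp
    have e1: "j < pdim P v \<Longrightarrow> pbdj P b j (pbd P b v) = pbdj P b j v" using o by (simp add: pbdj_step)
    show ?thesis
    proof (cases "pdim P v - 1 \<le> j")
      case True
      then have "pdim P v - 1 = j" using Suc.prems 3 by simp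
      then have "pdim P v - j = Suc 0" using 3 by simp
      then have "pbdj P b j v = pbd P b v"
        by (simp add: pbdj_def)
      moreover have "pdim P u \<le> j" "\<not> pdim P v \<le> j" using True 3 Suc.prems by auto
      ultimately show ?thesis using st pb IH dv True 3 Suc.prems by (simp add: pbdj_triv)
    next
      case False
      then show ?thesis using st pb IH dv 3 Suc.prems e1 by auto
    qed
  qed
qed

lemma pbdj_Cmp:
  assumes "omega_polygraph P" "comp_dims P i u v"
  shows "pbdj P b j (Cmp i u v) = (if max (pdim P u) (pdim P v) \<le> j then Cmp i u v
      else if min (pdim P u) (pdim P v) \<le> j then Cmp i (pbdj P b j u) (pbdj P b j v)
      else if b then pbdj P b j v else pbdj P b j u)"
  using pbdj_Cmp_gen[OF assms(1) assms(2) refl] .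

lemma pbdj_Cmp_low:
  assumes o: "omega_polygraph P" and w: "comp_dims P i u v" and j: "j < min (pdim P u) (pdim P v)"
  shows "pbdj P b j (Cmp i u v) = (if b then pbdj P b j v else pbdj P b j u)"
proof -
  have h: "\<not> max (pdim P u) (pdim P v) \<le> j" "\<not> min (pdim P u) (pdim P v) \<le> j" using j by auto
  show ?thesis by (subst pbdj_Cmp[OF o w]) (simp only: h if_False)
qed

lemma pbdj_Cmp_mid:
  assumes o: "omega_polygraph P" and w: "comp_dims P i u v" and j1: "min (pdim P u) (pdim P v) \<le> j"
    and j2: "j < max (pdim P u) (pdim P v)"
  shows "pbdj P b j (Cmp i u v) = Cmp i (pbdj P b j u) (pbdj P b j v)"
proof -
  have h: "\<not> max (pdim P u) (pdim P v) \<le> j" using j2 by auto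
  show ?thesis by (subst pbdj_Cmp[OF o w]) (simp only: h j1 if_False if_True)
qed

section \<open>Boundaries of normal forms\<close>

definition lcomp_word :: "('g,'x) polygraph_scheme \<Rightarrow> 'g whisk list \<Rightarrow> 'g nform \<Rightarrow> 'g nform" where
  "lcomp_word P L X = (if L = [] then X else ncomp P (NWord L) X)"
definition rcomp_word :: "('g,'x) polygraph_scheme \<Rightarrow> 'g nform \<Rightarrow> 'g whisk list \<Rightarrow> 'g nform" where
  "rcomp_word P X R = (if R = [] then X else ncomp P X (NWord R))"

fun whisk_bd :: "('g,'x) polygraph_scheme \<Rightarrow> bool \<Rightarrow> 'g whisk \<Rightarrow> 'g nform" where
  "whisk_bd P b (WGen g) = nf P (if b then gtgt P g else gsrc P g)"
| "whisk_bd P b (Whisk L W R) = lcomp_word P L (rcomp_word P (whisk_bd P b W) R)"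

fun nbd :: "('g,'x) polygraph_scheme \<Rightarrow> bool \<Rightarrow> 'g nform \<Rightarrow> 'g nform" where
  "nbd P b (NId x) = x"
| "nbd P b (NGen g) = NGen g"
| "nbd P b (NWord ws) = (if ws = [] then NWord [] else whisk_bd P b (if b then last ws else hd ws))"

definition nbdj :: "('g,'x) polygraph_scheme \<Rightarrow> bool \<Rightarrow> nat \<Rightarrow> 'g nform \<Rightarrow> 'g nform" where
  "nbdj P b j X = (nbd P b ^^ (ndim P X - j)) X"

lemma nbdj_triv: "ndim P X \<le> j \<Longrightarrow> nbdj P b j X = X"
  by (simp add: nbdj_def)

lemma nbdj_NId: "j \<le> ndim P x \<Longrightarrow> nbdj P b j (NId x) = nbdj P b j x"
proof -
  assume "j \<le> ndim P x"
  then have "Suc (ndim P x) - j = Suc (ndim P x - j)" by simp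
  then show ?thesis by (simp add: nbdj_def funpow_Suc_right del: funpow.simps)
qed

lemma ncomp_NId_right_unit:
  "i < ndim P U \<Longrightarrow> ndim P Z = i \<Longrightarrow> Z = nbdj P b i U \<Longrightarrow> ncomp P U (NId Z) = U"
proof (induction U)
  case (NGen g) then show ?case by simp
next
  case (NId x)
  show ?case
  proof (cases "ndim P x = i")
    case True
    then have "Z = x" using NId.prems by (simp add: nbdj_NId nbdj_triv)
    then show ?thesis using True by (simp add: ncomp_def)
  next
    case False
    then have lt: "i < ndim P x" using NId.prems by simp
    then have "Z = nbdj P b i x" using NId.prems by (simp add: nbdj_NId)
    then have "ncomp P x (NId Z) = x" using NId.IH lt NId.prems by blast
    moreover have "ncomp P (NId x) (NId Z) = NId (ncomp P x (NId Z))"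
      using lt NId.prems by (intro ncomp_NId_left_nrwhisk) simp
    ultimately show ?thesis by simp
  qed
next
  case (NWord ws)
  then show ?case by (auto simp: ncomp_def intro: map_idI)
qed

lemma ndim_whisk_bd: "omega_polygraph P \<Longrightarrow> whisk_ok P w \<Longrightarrow> ndim P (whisk_bd P b w) = gdim P (core w) - 1"
proof (induction w)
  case (WGen g) then show ?case by (auto simp: omega_dims)
next
  case (Whisk L W R)
  have L: "L \<noteq> [] \<Longrightarrow> ndim P (NWord L) = Suc (depth W)" using Whisk.prems by (cases L) auto
  have R: "R \<noteq> [] \<Longrightarrow> ndim P (NWord R) = Suc (depth W)" using Whisk.prems by (cases R) auto
  have "ndim P (whisk_bd P b W) = gdim P (core W) - 1" using Whisk by auto
  then show ?case using Whisk.prems L R by (auto simp: lcomp_word_def rcomp_word_def)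
qed

lemma whisk_bd_lwhisk:
  assumes o: "omega_polygraph P"
  shows "whisk_ok P w \<Longrightarrow> a \<noteq> [] \<Longrightarrow> word_ok P k a \<Longrightarrow> k \<le> depth w \<Longrightarrow>
     whisk_bd P b (lwhisk a k w) = ncomp P (NWord a) (whisk_bd P b w)"
proof (induction w)
  case (WGen g) then show ?case by (auto simp: word_ok_def neq_Nil_conv)
next
  case (Whisk L W R)
  have ka: "ndim P (NWord a) = k" using Whisk.prems by (auto simp: word_ok_def neq_Nil_conv)
  have k1: "1 \<le> k" using Whisk.prems by (auto simp: word_ok_def neq_Nil_conv)
  define n where "n = gdim P (core W)"
  have dW: "ndim P (whisk_bd P b W) = n - 1" using ndim_whisk_bd[OF o] Whisk.prems n_def by auto
  have dlt: "Suc (depth W) < n" using Whisk.prems n_def by auto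
  have L: "L \<noteq> [] \<Longrightarrow> ndim P (NWord L) = Suc (depth W)" using Whisk.prems by (cases L) auto
  have R: "R \<noteq> [] \<Longrightarrow> ndim P (NWord R) = Suc (depth W)" using Whisk.prems by (cases R) auto
  define Y0 where "Y0 = whisk_bd P b W"
  define Y where "Y = rcomp_word P Y0 R"
  have dY: "ndim P Y = n - 1" using dW dlt R by (auto simp: Y_def Y0_def rcomp_word_def)
  show ?case
  proof (cases "Suc (depth W) = k")
    case True
    have "whisk_bd P b (lwhisk a k (Whisk L W R)) = lcomp_word P (a @ L) Y" using True by (simp add: Y_def Y0_def)
    also have "\<dots> = ncomp P (NWord a) (lcomp_word P L Y)"
    proof (cases "L = []")
      case True then show ?thesis using Whisk.prems by (simp add: lcomp_word_def)
    next
      case False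
      have "ncomp P (NWord (a @ L)) Y = ncomp P (ncomp P (NWord a) (NWord L)) Y"
        using L False ka True by (simp add: ncomp_NWord_NWord_eq)
      also have "\<dots> = ncomp P (NWord a) (ncomp P (NWord L) Y)"
        using L False ka True dY dlt k1 by (intro ncomp_assoc) auto
      finally show ?thesis using False Whisk.prems by (simp add: lcomp_word_def)
    qed
    finally show ?thesis by (simp add: Y_def Y0_def)
  next
    case False
    then have lt: "k < Suc (depth W)" using Whisk.prems by simp
    have IH: "whisk_bd P b (lwhisk a k W) = ncomp P (NWord a) Y0"
      using Whisk.IH(2) Whisk.prems lt by (simp add: Y0_def)
    have r: "rcomp_word P (ncomp P (NWord a) Y0) (map (lwhisk a k) R) = ncomp P (NWord a) Y"
    proof (cases "R = []")
      case True then show ?thesis by (simp add: rcomp_word_def Y_def)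
    next
      case False
      have e: "NWord (map (lwhisk a k) R) = ncomp P (NWord a) (NWord R)"
        using ncomp_NWord_nlwhisk[of P "NWord a" R] ka lt R False by simp
      have "ncomp P (ncomp P (NWord a) Y0) (ncomp P (NWord a) (NWord R)) = ncomp P (NWord a) (ncomp P Y0 (NWord R))"
        using ka lt R False dW dlt by (intro ncomp_distrib_left[symmetric]) (auto simp: Y0_def)
      then show ?thesis using False e by (simp add: rcomp_word_def Y_def)
    qed
    have "lcomp_word P (map (lwhisk a k) L) (ncomp P (NWord a) Y) = ncomp P (NWord a) (lcomp_word P L Y)"
    proof (cases "L = []")
      case True then show ?thesis by (simp add: lcomp_word_def)
    next
      case False
      have e: "NWord (map (lwhisk a k) L) = ncomp P (NWord a) (NWord L)"
        using ncomp_NWord_nlwhisk[of P "NWord a" L] ka lt L False by simp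
      have "ncomp P (ncomp P (NWord a) (NWord L)) (ncomp P (NWord a) Y) = ncomp P (NWord a) (ncomp P (NWord L) Y)"
        using ka lt L False dY dlt by (intro ncomp_distrib_left[symmetric]) auto
      then show ?thesis using False e by (simp add: lcomp_word_def)
    qed
    then show ?thesis using lt False IH r by (simp add: Y_def Y0_def)
  qed
qed

lemma whisk_bd_rwhisk:
  assumes o: "omega_polygraph P"
  shows "whisk_ok P w \<Longrightarrow> a \<noteq> [] \<Longrightarrow> word_ok P k a \<Longrightarrow> k \<le> depth w \<Longrightarrow>
     whisk_bd P b (rwhisk a k w) = ncomp P (whisk_bd P b w) (NWord a)"
proof (induction w)
  case (WGen g) then show ?case by (auto simp: word_ok_def neq_Nil_conv)
next
  case (Whisk L W R)
  have ka: "ndim P (NWord a) = k" using Whisk.prems by (auto simp: word_ok_def neq_Nil_conv)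
  have k1: "1 \<le> k" using Whisk.prems by (auto simp: word_ok_def neq_Nil_conv)
  define n where "n = gdim P (core W)"
  have dW: "ndim P (whisk_bd P b W) = n - 1" using ndim_whisk_bd[OF o] Whisk.prems n_def by auto
  have dlt: "Suc (depth W) < n" using Whisk.prems n_def by auto
  have L: "L \<noteq> [] \<Longrightarrow> ndim P (NWord L) = Suc (depth W)" using Whisk.prems by (cases L) auto
  have R: "R \<noteq> [] \<Longrightarrow> ndim P (NWord R) = Suc (depth W)" using Whisk.prems by (cases R) auto
  define Y0 where "Y0 = whisk_bd P b W"
  show ?case
  proof (cases "Suc (depth W) = k")
    case True
    have r: "rcomp_word P Y0 (R @ a) = ncomp P (rcomp_word P Y0 R) (NWord a)"
    proof (cases "R = []")
      case True then show ?thesis using Whisk.prems by (simp add: rcomp_word_def)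
    next
      case False
      have "ncomp P Y0 (NWord (R @ a)) = ncomp P Y0 (ncomp P (NWord R) (NWord a))"
        using R False ka True by (simp add: ncomp_NWord_NWord_eq)
      also have "\<dots> = ncomp P (ncomp P Y0 (NWord R)) (NWord a)"
        using R False ka True dW dlt k1 by (intro ncomp_assoc[symmetric]) (auto simp: Y0_def)
      finally show ?thesis using False Whisk.prems by (simp add: rcomp_word_def)
    qed
    have dr: "ndim P (rcomp_word P Y0 R) = n - 1" using dW dlt R by (auto simp: Y0_def rcomp_word_def)
    have l: "lcomp_word P L (ncomp P (rcomp_word P Y0 R) (NWord a)) = ncomp P (lcomp_word P L (rcomp_word P Y0 R)) (NWord a)"
    proof (cases "L = []")
      case True then show ?thesis by (simp add: lcomp_word_def)
    next
      case False
      show ?thesis using False L ka True dr dlt k1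
        by (simp add: lcomp_word_def, intro ncomp_assoc[symmetric]) auto
    qed
    show ?thesis using True r l by (simp add: Y0_def)
  next
    case False
    then have lt: "k < Suc (depth W)" using Whisk.prems by simp
    have IH: "whisk_bd P b (rwhisk a k W) = ncomp P Y0 (NWord a)"
      using Whisk.IH(2) Whisk.prems lt by (simp add: Y0_def)
    have r: "rcomp_word P (ncomp P Y0 (NWord a)) (map (rwhisk a k) R) = ncomp P (rcomp_word P Y0 R) (NWord a)"
    proof (cases "R = []")
      case True then show ?thesis by (simp add: rcomp_word_def)
    next
      case False
      have e: "NWord (map (rwhisk a k) R) = ncomp P (NWord R) (NWord a)"
        using ncomp_NWord_nrwhisk[of P "NWord a" R] ka lt R False by simp
      have "ncomp P (ncomp P Y0 (NWord a)) (ncomp P (NWord R) (NWord a)) = ncomp P (ncomp P Y0 (NWord R)) (NWord a)"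
        using ka lt R False dW dlt by (intro ncomp_distrib_right[symmetric]) (auto simp: Y0_def)
      then show ?thesis using False e by (simp add: rcomp_word_def)
    qed
    have dr: "ndim P (rcomp_word P Y0 R) = n - 1" using dW dlt R by (auto simp: Y0_def rcomp_word_def)
    have "lcomp_word P (map (rwhisk a k) L) (ncomp P (rcomp_word P Y0 R) (NWord a)) = ncomp P (lcomp_word P L (rcomp_word P Y0 R)) (NWord a)"
    proof (cases "L = []")
      case True then show ?thesis by (simp add: lcomp_word_def)
    next
      case False
      have e: "NWord (map (rwhisk a k) L) = ncomp P (NWord L) (NWord a)"
        using ncomp_NWord_nrwhisk[of P "NWord a" L] ka lt L False by simp
      have "ncomp P (ncomp P (NWord L) (NWord a)) (ncomp P (rcomp_word P Y0 R) (NWord a)) = ncomp P (ncomp P (NWord L) (rcomp_word P Y0 R)) (NWord a)"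
        using ka lt L False dr dlt by (intro ncomp_distrib_right[symmetric]) auto
      then show ?thesis using False e by (simp add: lcomp_word_def)
    qed
    then show ?thesis using lt False IH r by (simp add: Y0_def)
  qed
qed

lemma nbd_NWord_map: "ws \<noteq> [] \<Longrightarrow> nbd P b (NWord (map f ws)) = whisk_bd P b (f (if b then last ws else hd ws))"
  by (auto simp: last_map hd_map)

lemma nbd_nlwhisk:
  assumes o: "omega_polygraph P" and cU: "nform_ok P U" and cV: "nform_ok P V"
    and d0: "0 < ndim P U" and dlt: "ndim P U < ndim P V"
  shows "nbd P b (ncomp P U V) = ncomp P U (nbd P b V)"
proof (cases V)
  case (NGen g) then show ?thesis using dlt by simp
next
  case (NId y)
  then show ?thesis using dlt by (simp add: ncomp_NId_right_nlwhisk)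
next
  case (NWord ws)
  have ne: "ws \<noteq> []" and wk: "word_ok P (ndim P V) ws" using cV NWord by auto
  define w where "w = (if b then last ws else hd ws)"
  have win: "w \<in> set ws" using ne by (auto simp: w_def)
  then have ww: "whisk_ok P w" "gdim P (core w) = ndim P V" "Suc (depth w) = ndim P V"
    using wk by (auto simp: word_ok_def)
  have e1: "ncomp P U V = NWord (map (lwhisk (word U) (ndim P U)) ws)" using NWord dlt by (simp add: ncomp_NWord_nlwhisk)
  have e2: "nbd P b V = whisk_bd P b w" using NWord ne by (simp add: w_def)
  have dwb: "ndim P (whisk_bd P b w) = ndim P V - 1" using ndim_whisk_bd[OF o ww(1)] ww by simp
  show ?thesis
  proof (cases U)
    case (NGen g) then show ?thesis using d0 by simp
  next
    case (NId x)
    have "ncomp P (NId x) (whisk_bd P b w) = whisk_bd P b w" by (rule ncomp_NId_left) (use NId dwb dlt in simp)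
    then show ?thesis using e1 e2 NId ne by (simp add: nbd_NWord_map w_def[symmetric])
  next
    case (NWord a)
    have "a \<noteq> []" "word_ok P (ndim P U) a" using cU NWord by auto
    then have "whisk_bd P b (lwhisk a (ndim P U) w) = ncomp P (NWord a) (whisk_bd P b w)"
      using whisk_bd_lwhisk[OF o ww(1)] ww dlt NWord by auto
    moreover have "nbd P b (NWord (map (lwhisk a (ndim P U)) ws)) = whisk_bd P b (lwhisk a (ndim P U) w)"
      using ne by (cases b) (simp_all add: w_def last_map hd_map)
    ultimately show ?thesis using e1 e2 NWord by simp
  qed
qed

lemma nbd_nrwhisk:
  assumes o: "omega_polygraph P" and cU: "nform_ok P U" and cV: "nform_ok P V"
    and d0: "0 < ndim P V" and dlt: "ndim P V < ndim P U"
    and ru: "\<And>x. V = NId x \<Longrightarrow> x = nbdj P True (ndim P x) (nbd P b U)"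
  shows "nbd P b (ncomp P U V) = ncomp P (nbd P b U) V"
proof (cases U)
  case (NGen g) then show ?thesis using dlt by simp
next
  case (NId y)
  then show ?thesis using dlt by (simp add: ncomp_NId_left_nrwhisk)
next
  case (NWord ws)
  have ne: "ws \<noteq> []" and wk: "word_ok P (ndim P U) ws" using cU NWord by auto
  define w where "w = (if b then last ws else hd ws)"
  have win: "w \<in> set ws" using ne by (auto simp: w_def)
  then have ww: "whisk_ok P w" "gdim P (core w) = ndim P U" "Suc (depth w) = ndim P U"
    using wk by (auto simp: word_ok_def)
  have e1: "ncomp P U V = NWord (map (rwhisk (word V) (ndim P V)) ws)" using NWord dlt by (simp add: ncomp_NWord_nrwhisk)
  have e2: "nbd P b U = whisk_bd P b w" using NWord ne by (simp add: w_def)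
  have dwb: "ndim P (whisk_bd P b w) = ndim P U - 1" using ndim_whisk_bd[OF o ww(1)] ww by simp
  show ?thesis
  proof (cases V)
    case (NGen g) then show ?thesis using d0 by simp
  next
    case (NId x)
    have "ncomp P (whisk_bd P b w) (NId x) = whisk_bd P b w"
      using ru[OF NId] e2 dwb dlt NId by (intro ncomp_NId_right_unit[of "ndim P x" P _ _ True]) auto
    then show ?thesis using e1 e2 NId ne by (simp add: nbd_NWord_map w_def[symmetric])
  next
    case (NWord a)
    have "a \<noteq> []" "word_ok P (ndim P V) a" using cV NWord by auto
    then have "whisk_bd P b (rwhisk a (ndim P V) w) = ncomp P (whisk_bd P b w) (NWord a)"
      using whisk_bd_rwhisk[OF o ww(1)] ww dlt NWord by auto
    moreover have "nbd P b (NWord (map (rwhisk a (ndim P V)) ws)) = whisk_bd P b (rwhisk a (ndim P V) w)"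
      using ne by (cases b) (simp_all add: w_def last_map hd_map)
    ultimately show ?thesis using e1 e2 NWord by simp
  qed
qed

lemma nbd_ncat:
  assumes cU: "nform_ok P U" and cV: "nform_ok P V" and d: "ndim P U = ndim P V" "0 < ndim P U"
    and c: "nbd P True U = nbd P False V"
  shows "nbd P b (ncomp P U V) = (if b then nbd P b V else nbd P b U)"
proof -
  have m: "ncomp P U V = ncat U V" using d by (simp add: ncomp_def)
  show ?thesis
  proof (cases U)
    case (NGen g) then show ?thesis using d by simp
  next
    case (NId x) then show ?thesis using m c by auto
  next
    case (NWord a)
    show ?thesis
    proof (cases V)
      case (NGen g) then show ?thesis using d by simp
    next
      case (NId z) then show ?thesis using m c NWord by auto
    next
      case (NWord c')
      have "a \<noteq> []" "c' \<noteq> []" using cU cV NWord \<open>U = NWord a\<close> by auto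
      then show ?thesis using m NWord \<open>U = NWord a\<close> by auto
    qed
  qed
qed

lemma nbdj_one: "0 < ndim P X \<Longrightarrow> nbdj P b (ndim P X - 1) X = nbd P b X"
  by (simp add: nbdj_def)

definition nglobular :: "('g,'x) polygraph_scheme \<Rightarrow> 'g nform \<Rightarrow> bool" where
  "nglobular P X \<longleftrightarrow> (\<forall>b b'. nbd P b' (nbd P b X) = nbd P b' (nbd P b' X))"

lemma nglobularD: "nglobular P X \<Longrightarrow> nbd P b' (nbd P b X) = nbd P b' (nbd P b' X)"
  by (simp add: nglobular_def)

lemma nbdj_nbd:
  assumes g: "nglobular P Y" and i: "i < ndim P Y - 1" and d: "ndim P (nbd P b Y) = ndim P Y - 1"
  shows "nbdj P b' i (nbd P b Y) = nbdj P b' i Y"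
proof -
  obtain m where m: "ndim P Y - 1 - i = Suc m" using i by (cases "ndim P Y - 1 - i") auto
  then have m': "ndim P Y - i = Suc (Suc m)" by simp
  have "nbdj P b' i (nbd P b Y) = (nbd P b' ^^ m) (nbd P b' (nbd P b Y))"
    using d m by (simp add: nbdj_def funpow_Suc_right del: funpow.simps)
  also have "\<dots> = (nbd P b' ^^ m) (nbd P b' (nbd P b' Y))"
    using nglobularD[OF g, where b=b and b'=b'] by simp
  also have "\<dots> = nbdj P b' i Y"
    using m' by (simp add: nbdj_def funpow_Suc_right del: funpow.simps)
  finally show ?thesis .
qed

lemma whisk_bd_pad: "whisk_bd P b (pad m w) = whisk_bd P b w"
  by (induction m) (auto simp: lcomp_word_def rcomp_word_def)

section \<open>Soundness of normalization\<close>

text \<open>\<open>wf_term\<close> checks composability on normal forms instead of by \<open>pceq\<close>; by soundness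
  and completeness it characterizes the cells of \<open>P*\<close>.\<close>

fun wf_term :: "('g,'x) polygraph_scheme \<Rightarrow> 'g pterm \<Rightarrow> bool" where
  "wf_term P (Gen g) = True"
| "wf_term P (Idt u) = wf_term P u"
| "wf_term P (Cmp i u v) = (wf_term P u \<and> wf_term P v \<and> comp_dims P i u v \<and>
      nbdj P True i (nf P u) = nbdj P False i (nf P v))"

definition good_gen :: "('g,'x) polygraph_scheme \<Rightarrow> 'g \<Rightarrow> bool" where
  "good_gen P g \<longleftrightarrow> (0 < gdim P g \<longrightarrow> wf_term P (gsrc P g) \<and> wf_term P (gtgt P g) \<and>
     (2 \<le> gdim P g \<longrightarrow> (\<forall>b. nbd P b (nf P (gsrc P g)) = nbd P b (nf P (gtgt P g)))))"

definition good_gens_upto :: "('g,'x) polygraph_scheme \<Rightarrow> nat \<Rightarrow> bool" where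
  "good_gens_upto P n \<longleftrightarrow> (\<forall>g. gdim P g \<le> n \<longrightarrow> good_gen P g)"

lemma good_gens_upto_mono: "good_gens_upto P n \<Longrightarrow> m \<le> n \<Longrightarrow> good_gens_upto P m"
  by (auto simp: good_gens_upto_def)

definition nf_pbd_commute :: "('g,'x) polygraph_scheme \<Rightarrow> 'g pterm \<Rightarrow> bool" where
  "nf_pbd_commute P x \<longleftrightarrow> (\<forall>b. nf P (pbd P b x) = nbd P b (nf P x) \<and> wf_term P (pbd P b x))"

lemma ndim_nbd_nf:
  "omega_polygraph P \<Longrightarrow> nf_pbd_commute P x \<Longrightarrow> 0 < pdim P x \<Longrightarrow> ndim P (nbd P b (nf P x)) = pdim P x - 1"
  by (metis nf_pbd_commute_def ndim_nf pdim_pbd)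

lemma nform_ok_nbd_nf: "nf_pbd_commute P x \<Longrightarrow> nform_ok P (nbd P b (nf P x))"
  by (metis nf_pbd_commute_def nform_ok_nf)

lemma wf_term_Cmp_eq_match:
  assumes w: "wf_term P (Cmp i a c)" and eq: "pdim P a = pdim P c"
  shows "nbd P True (nf P a) = nbd P False (nf P c)"
proof -
  have "0 < pdim P a" "i = pdim P a - 1" using w eq by (auto simp: comp_dims_def)
  then show ?thesis using w eq nbdj_one[of P "nf P a" True] nbdj_one[of P "nf P c" False] by simp
qed

lemma nbd_nf_Cmp_eq:
  assumes w: "wf_term P (Cmp i a c)" and eq: "pdim P a = pdim P c"
  shows "nbd P b (nf P (Cmp i a c)) = (if b then nbd P b (nf P c) else nbd P b (nf P a))"
proof -
  have "0 < pdim P a" using w by (auto simp: comp_dims_def)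
  then show ?thesis
    using nbd_ncat[OF nform_ok_nf nform_ok_nf _ _ wf_term_Cmp_eq_match[OF w eq]] eq by simp
qed

lemma nf_pbd_commute_Cmp_eq:
  assumes w: "wf_term P (Cmp i a c)" and eq: "pdim P a = pdim P c"
    and a: "nf_pbd_commute P a" and c: "nf_pbd_commute P c"
  shows "nf_pbd_commute P (Cmp i a c)"
proof -
  have "pbd P b (Cmp i a c) = (if b then pbd P b c else pbd P b a)" for b using eq by simp
  then show ?thesis using a c nbd_nf_Cmp_eq[OF w eq] by (simp add: nf_pbd_commute_def)
qed

lemma nglobular_nf_Cmp_eq:
  assumes w: "wf_term P (Cmp i a c)" and eq: "pdim P a = pdim P c"
    and ga: "nglobular P (nf P a)" and gc: "nglobular P (nf P c)"
  shows "nglobular P (nf P (Cmp i a c))"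
proof -
  have "nbd P b' (nbd P True (nf P c)) = nbd P b' (nbd P False (nf P a))" for b'
    using ga gc wf_term_Cmp_eq_match[OF w eq] unfolding nglobular_def by metis
  then show ?thesis unfolding nglobular_def
  proof (intro allI)
    fix b b'
    assume "\<And>b'. nbd P b' (nbd P True (nf P c)) = nbd P b' (nbd P False (nf P a))"
    then show "nbd P b' (nbd P b (nf P (Cmp i a c))) = nbd P b' (nbd P b' (nf P (Cmp i a c)))"
      by (cases b; cases b') (simp_all add: nbd_nf_Cmp_eq[OF w eq, simplified])
  qed
qed

lemma wf_term_Cmp_pbd_right:
  assumes o: "omega_polygraph P" and w: "wf_term P (Cmp i a c)" and lt: "pdim P a < pdim P c"
    and c: "nf_pbd_commute P c" and gc: "nglobular P (nf P c)"
  shows "wf_term P (Cmp i a (pbd P b c))"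
proof -
  have i: "i = pdim P a - 1" "0 < pdim P a" using w lt by (auto simp: comp_dims_def)
  have "nbdj P False i (nbd P b (nf P c)) = nbdj P False i (nf P c)"
    using nbdj_nbd[OF gc] ndim_nbd_nf[OF o c] i lt by simp
  then show ?thesis
    using w c i lt pdim_pbd[OF o, of c b] by (auto simp: comp_dims_def nf_pbd_commute_def)
qed

lemma nbd_nf_Cmp_lt:
  assumes o: "omega_polygraph P" and w: "wf_term P (Cmp i a c)" and lt: "pdim P a < pdim P c"
  shows "nbd P b (nf P (Cmp i a c)) = ncomp P (nf P a) (nbd P b (nf P c))"
  using nbd_nlwhisk[OF o nform_ok_nf nform_ok_nf] w lt by (simp add: comp_dims_def)

lemma nf_pbd_commute_Cmp_lt:
  assumes o: "omega_polygraph P" and w: "wf_term P (Cmp i a c)" and lt: "pdim P a < pdim P c"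
    and c: "nf_pbd_commute P c" and gc: "nglobular P (nf P c)"
  shows "nf_pbd_commute P (Cmp i a c)"
  using lt c nbd_nf_Cmp_lt[OF o w lt] wf_term_Cmp_pbd_right[OF o w lt c gc]
  by (simp add: nf_pbd_commute_def)

lemma nglobular_nf_Cmp_lt:
  assumes o: "omega_polygraph P" and w: "wf_term P (Cmp i a c)" and lt: "pdim P a < pdim P c"
    and c: "nf_pbd_commute P c" and gc: "nglobular P (nf P c)"
  shows "nglobular P (nf P (Cmp i a c))"
proof -
  have a0: "0 < pdim P a" and i: "i = pdim P a - 1" using w lt by (auto simp: comp_dims_def)
  have dc: "ndim P (nbd P b (nf P c)) = pdim P c - 1" for b using ndim_nbd_nf[OF o c] lt by simp
  have "nbd P b' (nbd P b (nf P (Cmp i a c))) = nbd P b' (nbd P b' (nf P (Cmp i a c)))" for b b'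
  proof (cases "pdim P a < pdim P c - 1")
    case True
    have "nbd P b' (nbd P b (nf P (Cmp i a c))) = ncomp P (nf P a) (nbd P b' (nbd P b (nf P c)))" for b
      using nbd_nf_Cmp_lt[OF o w lt] nbd_nlwhisk[OF o nform_ok_nf nform_ok_nbd_nf[OF c]] a0 dc True
      by simp
    then show ?thesis using nglobularD[OF gc, where b=b and b'=b'] by simp
  next
    case False
    then have deq: "pdim P a = pdim P c - 1" using lt by simp
    have "nbd P True (nf P a) = nbd P False (nbd P b'' (nf P c))" for b''
    proof -
      have "pdim P a = pdim P (pbd P b'' c)" using deq pdim_pbd[OF o, of c b''] lt by simp
      then have "nbd P True (nf P a) = nbd P False (nf P (pbd P b'' c))"
        using wf_term_Cmp_eq_match[OF wf_term_Cmp_pbd_right[OF o w lt c gc]] by blast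
      then show ?thesis using c by (simp add: nf_pbd_commute_def)
    qed
    then have "nbd P b' (ncomp P (nf P a) (nbd P b'' (nf P c)))
        = (if b' then nbd P b' (nbd P b'' (nf P c)) else nbd P b' (nf P a))" for b''
      using nbd_ncat[OF nform_ok_nf nform_ok_nbd_nf[OF c]] a0 dc deq by simp
    then show ?thesis
      using nbd_nf_Cmp_lt[OF o w lt] nglobularD[OF gc, where b=b and b'=b'] by (cases b') simp_all
  qed
  then show ?thesis by (simp add: nglobular_def)
qed

lemma nbdj_nbd_nf_Cmp_gt:
  assumes o: "omega_polygraph P" and w: "wf_term P (Cmp i a c)" and gt: "pdim P c < pdim P a"
    and a: "nf_pbd_commute P a" and ga: "nglobular P (nf P a)"
  shows "nbdj P True i (nbd P b (nf P a)) = nbdj P True i (nf P a)"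
proof -
  have "i = pdim P c - 1" "0 < pdim P c" using w gt by (auto simp: comp_dims_def)
  then show ?thesis using nbdj_nbd[OF ga] ndim_nbd_nf[OF o a] gt by simp
qed

text \<open>If the right factor is an identity, composability makes it the identity on the
  target of the left factor, which is what the right unit law needs.\<close>

lemma nbd_nf_Cmp_gt:
  assumes o: "omega_polygraph P" and w: "wf_term P (Cmp i a c)" and gt: "pdim P c < pdim P a"
    and a: "nf_pbd_commute P a" and ga: "nglobular P (nf P a)"
  shows "nbd P b (nf P (Cmp i a c)) = ncomp P (nbd P b (nf P a)) (nf P c)"
proof -
  have c0: "0 < pdim P c" and i: "i = pdim P c - 1" using w gt by (auto simp: comp_dims_def)
  have unit: "x = nbdj P True (ndim P x) (nbd P b (nf P a))" if x: "nf P c = NId x" for x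
  proof -
    have "ndim P x = i" using i arg_cong[OF x, of "ndim P"] by simp
    then show ?thesis using w x nbdj_nbd_nf_Cmp_gt[OF o w gt a ga] by (simp add: nbdj_NId nbdj_triv)
  qed
  show ?thesis using nbd_nrwhisk[OF o nform_ok_nf nform_ok_nf _ _ unit] c0 gt by simp
qed

lemma wf_term_Cmp_pbd_left:
  assumes o: "omega_polygraph P" and w: "wf_term P (Cmp i a c)" and gt: "pdim P c < pdim P a"
    and a: "nf_pbd_commute P a" and ga: "nglobular P (nf P a)"
  shows "wf_term P (Cmp i (pbd P b a) c)"
  using w a gt pdim_pbd[OF o, of a b] nbdj_nbd_nf_Cmp_gt[OF o w gt a ga]
  by (auto simp: comp_dims_def nf_pbd_commute_def)

lemma nf_pbd_commute_Cmp_gt: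
  assumes o: "omega_polygraph P" and w: "wf_term P (Cmp i a c)" and gt: "pdim P c < pdim P a"
    and a: "nf_pbd_commute P a" and ga: "nglobular P (nf P a)"
  shows "nf_pbd_commute P (Cmp i a c)"
  using gt a nbd_nf_Cmp_gt[OF o w gt a ga] wf_term_Cmp_pbd_left[OF o w gt a ga]
  by (simp add: nf_pbd_commute_def)

lemma nglobular_nf_Cmp_gt:
  assumes o: "omega_polygraph P" and w: "wf_term P (Cmp i a c)" and gt: "pdim P c < pdim P a"
    and a: "nf_pbd_commute P a" and ga: "nglobular P (nf P a)"
  shows "nglobular P (nf P (Cmp i a c))"
proof -
  have c0: "0 < pdim P c" and i: "i = pdim P c - 1" using w gt by (auto simp: comp_dims_def)
  have da: "ndim P (nbd P b (nf P a)) = pdim P a - 1" for b using ndim_nbd_nf[OF o a] gt by simp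
  consider (adj) "pdim P c = pdim P a - 1" | (unit) x where "nf P c = NId x"
    | (low) "pdim P c < pdim P a - 1" "\<nexists>x. nf P c = NId x"
    using gt by force
  then show ?thesis
  proof cases
    case low
    have "nbd P b' (ncomp P (nbd P b (nf P a)) (nf P c)) = ncomp P (nbd P b' (nbd P b (nf P a))) (nf P c)"
      for b b'
      by (rule nbd_nrwhisk[OF o nform_ok_nbd_nf[OF a] nform_ok_nf]) (use low da c0 in auto)
    then have "nbd P b' (nbd P b (nf P (Cmp i a c))) = ncomp P (nbd P b' (nbd P b (nf P a))) (nf P c)"
      for b b'
      using nbd_nf_Cmp_gt[OF o w gt a ga] by simp
    then show ?thesis using nglobularD[OF ga] unfolding nglobular_def by metis
  next
    case unit
    have "ndim P x = i" using i arg_cong[OF unit, of "ndim P"] by simp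
    moreover have "x = nbdj P True i (nf P a)" using w unit calculation
      by (simp add: nbdj_NId nbdj_triv)
    ultimately have "ncomp P (nf P a) (NId x) = nf P a"
      using i gt by (intro ncomp_NId_right_unit[of i P _ _ True]) auto
    then show ?thesis using ga unit by simp
  next
    case adj
    have "nbd P True (nbd P b (nf P a)) = nbd P False (nf P c)" for b
    proof -
      have "pdim P (pbd P b a) = pdim P c" using adj pdim_pbd[OF o, of a b] gt by simp
      then have "nbd P True (nf P (pbd P b a)) = nbd P False (nf P c)"
        using wf_term_Cmp_eq_match[OF wf_term_Cmp_pbd_left[OF o w gt a ga]] by blast
      then show ?thesis using a by (simp add: nf_pbd_commute_def)
    qed
    then have "nbd P b' (ncomp P (nbd P b (nf P a)) (nf P c))
        = (if b' then nbd P b' (nf P c) else nbd P b' (nbd P b (nf P a)))" for b b'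
      using nbd_ncat[OF nform_ok_nbd_nf[OF a] nform_ok_nf] c0 da adj by simp
    then have "nbd P b' (nbd P b (nf P (Cmp i a c))) = nbd P b' (nbd P b' (nf P (Cmp i a c)))" for b b'
      using nbd_nf_Cmp_gt[OF o w gt a ga] nglobularD[OF ga, where b=b and b'=b'] by (cases b') simp_all
    then show ?thesis by (simp add: nglobular_def)
  qed
qed

lemma nf_pbd:
  assumes o: "omega_polygraph P"
  shows "good_gens_upto P (pdim P x) \<Longrightarrow> wf_term P x \<Longrightarrow> 0 < pdim P x \<Longrightarrow>
    nf_pbd_commute P x \<and> (2 \<le> pdim P x \<longrightarrow> nglobular P (nf P x))"
proof (induction x)
  case (Gen g)
  then show ?case
    by (auto simp: whisk_bd_pad good_gens_upto_def good_gen_def nf_pbd_commute_def nglobular_def)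
next
  case (Idt u)
  then show ?case by (simp add: nf_pbd_commute_def nglobular_def)
next
  case (Cmp i a c)
  have w: "wf_term P (Cmp i a c)" using Cmp.prems(2) .
  then have "0 < pdim P a" "0 < pdim P c" by (auto simp: comp_dims_def)
  moreover have "good_gens_upto P (pdim P a)" "good_gens_upto P (pdim P c)"
    by (rule good_gens_upto_mono[OF Cmp.prems(1)]; simp)+
  ultimately have IH: "nf_pbd_commute P a" "2 \<le> pdim P a \<Longrightarrow> nglobular P (nf P a)"
      "nf_pbd_commute P c" "2 \<le> pdim P c \<Longrightarrow> nglobular P (nf P c)"
    using Cmp.IH w by auto
  consider "pdim P a = pdim P c" | "pdim P a < pdim P c" | "pdim P c < pdim P a" by linarith
  then show ?case
  proof cases
    case 1
    then show ?thesis using IH nf_pbd_commute_Cmp_eq[OF w] nglobular_nf_Cmp_eq[OF w] by simp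
  next
    case 2
    then show ?thesis using IH \<open>0 < pdim P a\<close> nf_pbd_commute_Cmp_lt[OF o w] nglobular_nf_Cmp_lt[OF o w]
      by simp
  next
    case 3
    then show ?thesis using IH \<open>0 < pdim P c\<close> nf_pbd_commute_Cmp_gt[OF o w] nglobular_nf_Cmp_gt[OF o w]
      by simp
  qed
qed

lemma nf_pbd_pow:
  assumes o: "omega_polygraph P" and g: "good_gens_upto P (pdim P x)" and w: "wf_term P x"
  shows "n \<le> pdim P x \<Longrightarrow> nf P ((pbd P b ^^ n) x) = (nbd P b ^^ n) (nf P x) \<and> wf_term P ((pbd P b ^^ n) x)"
proof (induction n)
  case 0 then show ?case using w by simp
next
  case (Suc n)
  define y where "y = (pbd P b ^^ n) x"
  have IH: "nf P y = (nbd P b ^^ n) (nf P x)" "wf_term P y" using Suc by (auto simp: y_def)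
  have dy: "pdim P y = pdim P x - n" using pdim_pbd_pow[OF o] Suc.prems by (simp add: y_def)
  have "good_gens_upto P (pdim P y)" using g dy by (auto intro: good_gens_upto_mono)
  then have "nf P (pbd P b y) = nbd P b (nf P y) \<and> wf_term P (pbd P b y)"
    using nf_pbd[OF o _ IH(2)] dy Suc.prems by (auto simp: nf_pbd_commute_def)
  then show ?case using IH by (simp add: y_def)
qed

lemma nf_pbdj_upto:
  assumes o: "omega_polygraph P" and g: "good_gens_upto P (pdim P x)" and w: "wf_term P x"
  shows "nf P (pbdj P b j x) = nbdj P b j (nf P x)" "wf_term P (pbdj P b j x)"
  using nf_pbd_pow[OF o g w, of "pdim P x - j" b] by (auto simp: pbdj_def nbdj_def)

lemma nbdj_nbd_pow_upto:
  assumes o: "omega_polygraph P"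
  shows "good_gens_upto P (pdim P x) \<Longrightarrow> wf_term P x \<Longrightarrow> i + n < pdim P x \<Longrightarrow>
    nbdj P b' i ((nbd P b ^^ n) (nf P x)) = nbdj P b' i (nf P x)"
proof (induction n arbitrary: x)
  case 0 then show ?case by simp
next
  case (Suc n)
  have d0: "0 < pdim P x" using Suc.prems by simp
  have x: "nf_pbd_commute P x" "nglobular P (nf P x)"
    using nf_pbd[OF o Suc.prems(1,2) d0] Suc.prems by auto
  then have nf: "nf P (pbd P b x) = nbd P b (nf P x)" and wf: "wf_term P (pbd P b x)"
    by (auto simp: nf_pbd_commute_def)
  have dp: "pdim P (pbd P b x) = pdim P x - 1" using o d0 by (simp add: pdim_pbd)
  have g: "good_gens_upto P (pdim P (pbd P b x))" using Suc.prems(1) dp by (auto intro: good_gens_upto_mono)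
  have "(nbd P b ^^ Suc n) (nf P x) = (nbd P b ^^ n) (nf P (pbd P b x))"
    using nf by (simp add: funpow_Suc_right del: funpow.simps)
  then have "nbdj P b' i ((nbd P b ^^ Suc n) (nf P x)) = nbdj P b' i (nf P (pbd P b x))"
    using Suc.IH[OF g wf] Suc.prems dp by simp
  also have "\<dots> = nbdj P b' i (nf P x)"
    using nbdj_nbd[OF x(2)] ndim_nbd_nf[OF o x(1) d0] nf Suc.prems(3) by simp
  finally show ?case .
qed

lemma nbdj_nbdj_upto:
  assumes o: "omega_polygraph P" and g: "good_gens_upto P (pdim P x)" and w: "wf_term P x" and ij: "i < j"
  shows "nbdj P b' i (nbdj P b j (nf P x)) = nbdj P b' i (nf P x)"
proof (cases "j < pdim P x")
  case True
  then show ?thesis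
    using nbdj_nbd_pow_upto[OF o g w, of i "pdim P x - j" b' b] ij by (simp add: nbdj_def[of P b j])
next
  case False
  then show ?thesis by (simp add: nbdj_triv)
qed

fun hered_cell :: "('g,'x) polygraph_scheme \<Rightarrow> 'g pterm \<Rightarrow> bool" where
  "hered_cell P (Gen g) = True"
| "hered_cell P (Idt u) = (hered_cell P u \<and> pcell P u)"
| "hered_cell P (Cmp i u v) = (hered_cell P u \<and> hered_cell P v \<and> pcell P u \<and> pcell P v \<and> comp_dims P i u v)"

lemma pceq_pcell_left: "pceq P x y \<Longrightarrow> pcell P x"
  unfolding pcell_def by (meson pceq.sym pceq.trans)
lemma pceq_pcell_right: "pceq P x y \<Longrightarrow> pcell P y"
  unfolding pcell_def by (meson pceq.sym pceq.trans)

lemma pceq_hered_cell: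
  assumes o: "omega_polygraph P"
  shows "pceq P x y \<Longrightarrow> hered_cell P x \<and> hered_cell P y \<and> pdim P x = pdim P y"
proof (induction rule: pceq.induct)
  case (gen g) then show ?case by simp
next
  case (idt u u') then show ?case using pceq_pcell_left pceq_pcell_right by auto
next
  case (cmp u u' v v' i)
  then show ?case using pceq_pcell_left pceq_pcell_right by (auto simp: comp_dims_def)
next
  case (sym x y) then show ?case by auto
next
  case (trans x y z) then show ?case by auto
next
  case (unit_l u i)
  have "pdim P (psrc P i u) = i" using unit_l.hyps o by (simp add: psrc_pbdj pdim_pbdj)
  then show ?case using unit_l by auto
next
  case (unit_r u i)
  have "pdim P (ptgt P i u) = i" using unit_r.hyps o by (simp add: ptgt_pbdj pdim_pbdj)
  then show ?case using unit_r by auto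
next
  case (assoc i u v w)
  then show ?case by (simp add: max.assoc)
next
  case (dist_l i j u v w)
  then show ?case by (simp add: max_def)
next
  case (dist_r i j v w u)
  then show ?case by (simp add: max_def)
next
  case (id_l i u v)
  then have "pdim P u \<le> pdim P v" by (simp add: comp_dims_def min_def split: if_splits; linarith)
  then show ?case using id_l by auto
next
  case (id_r i v u)
  then have "pdim P u \<le> pdim P v" by (simp add: comp_dims_def min_def split: if_splits; linarith)
  then show ?case using id_r by auto
qed

lemma pceq_pdim: "omega_polygraph P \<Longrightarrow> pceq P x y \<Longrightarrow> pdim P x = pdim P y"
  using pceq_hered_cell by blast

lemma pcell_CmpD:
  assumes o: "omega_polygraph P" and p: "pcell P (Cmp i X Y)"
  shows "pcell P X" "pcell P Y" "comp_dims P i X Y"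
  using pceq_hered_cell[OF o p[unfolded pcell_def]] by auto

lemma pcell_IdtD:
  assumes o: "omega_polygraph P" and p: "pcell P (Idt X)"
  shows "pcell P X"
  using pceq_hered_cell[OF o p[unfolded pcell_def]] by auto

lemma assoc_dims: "0 < (a::nat) \<Longrightarrow> 0 < b \<Longrightarrow> 0 < c \<Longrightarrow> i = min a b - 1 \<Longrightarrow> i = min (max a b) c - 1 \<Longrightarrow>
  i = min b c - 1 \<Longrightarrow> i = min a (max b c) - 1 \<Longrightarrow> (b \<le> a \<and> b \<le> c \<and> \<not> (b < a \<and> b < c)) \<or> (a = c \<and> a < b)"
  by (simp add: min_def max_def split: if_splits; linarith)

lemma distrib_dims: "0 < (a::nat) \<Longrightarrow> 0 < b \<Longrightarrow> 0 < c \<Longrightarrow> i = min a b - 1 \<Longrightarrow> i = min a c - 1 \<Longrightarrow>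
  j = min b c - 1 \<Longrightarrow> i < j \<Longrightarrow> a < b \<and> a < c"
  by (simp add: min_def split: if_splits; linarith)

lemma nf_Cmp_assoc:
  assumes "comp_dims P i u v" "comp_dims P i (Cmp i u v) w" "comp_dims P i v w" "comp_dims P i u (Cmp i v w)"
  shows "nf P (Cmp i (Cmp i u v) w) = nf P (Cmp i u (Cmp i v w))"
  using assms assoc_dims[of "pdim P u" "pdim P v" "pdim P w" i]
  by (simp add: comp_dims_def ncomp_assoc)

lemma nf_Cmp_distrib_left:
  assumes "i < j" "comp_dims P i u v" "comp_dims P i u w" "comp_dims P j v w"
  shows "nf P (Cmp i u (Cmp j v w)) = nf P (Cmp j (Cmp i u v) (Cmp i u w))"
  using assms distrib_dims[of "pdim P u" "pdim P v" "pdim P w" i j]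
  by (simp add: comp_dims_def ncomp_distrib_left)

lemma nf_Cmp_distrib_right:
  assumes "i < j" "comp_dims P i v u" "comp_dims P i w u" "comp_dims P j v w"
  shows "nf P (Cmp i (Cmp j v w) u) = nf P (Cmp j (Cmp i v u) (Cmp i w u))"
  using assms distrib_dims[of "pdim P u" "pdim P v" "pdim P w" i j]
  by (simp add: comp_dims_def ncomp_distrib_right min.commute)

lemma nf_Cmp_Idt_right:
  assumes "comp_dims P i u (Idt v)" "comp_dims P i u v"
  shows "nf P (Cmp i u (Idt v)) = nf P (Idt (Cmp i u v))"
proof -
  have "pdim P u \<le> pdim P v" using assms by (simp add: comp_dims_def min_def split: if_splits; linarith)
  then show ?thesis by (simp add: ncomp_NId_right_nlwhisk)
qed

lemma nf_Cmp_Idt_left: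
  assumes "comp_dims P i (Idt v) u" "comp_dims P i v u"
  shows "nf P (Cmp i (Idt v) u) = nf P (Idt (Cmp i v u))"
proof -
  have "pdim P u \<le> pdim P v" using assms by (simp add: comp_dims_def min_def split: if_splits; linarith)
  then show ?thesis by (simp add: ncomp_NId_left_nrwhisk)
qed

lemma nf_unit_left:
  "omega_polygraph P \<Longrightarrow> i < pdim P u \<Longrightarrow> nf P (Cmp i (Idt (psrc P i u)) u) = nf P u"
  by (simp add: ncomp_NId_left psrc_pbdj pdim_pbdj)

lemma nf_unit_right:
  assumes o: "omega_polygraph P" and g: "good_gens_upto P (pdim P u)" and w: "wf_term P u"
    and i: "i < pdim P u"
  shows "nf P (Cmp i u (Idt (ptgt P i u))) = nf P u"
proof -
  have "nf P (ptgt P i u) = nbdj P True i (nf P u)" using nf_pbdj_upto[OF o g w] by (simp add: ptgt_pbdj)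
  moreover have "ndim P (nf P (ptgt P i u)) = i" using o i by (simp add: ptgt_pbdj pdim_pbdj)
  ultimately have "ncomp P (nf P u) (NId (nf P (ptgt P i u))) = nf P u"
    using ncomp_NId_right_unit[of i P "nf P u" "nf P (ptgt P i u)" True] i by simp
  then show ?thesis by simp
qed

lemma pceq_nf_upto:
  assumes o: "omega_polygraph P"
  shows "pceq P x y \<Longrightarrow> good_gens_upto P (pdim P x) \<Longrightarrow> nf P x = nf P y \<and> wf_term P x \<and> wf_term P y"
proof (induction rule: pceq.induct)
  case (gen g) then show ?case by simp
next
  case (idt u u')
  have "good_gens_upto P (pdim P u)" by (rule good_gens_upto_mono[OF idt.prems]) simp
  then show ?case using idt.IH by simp
next
  case (cmp u u' v v' i)
  have g: "good_gens_upto P (pdim P u)" "good_gens_upto P (pdim P v)"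
    "good_gens_upto P (pdim P (ptgt P i u))"
    using cmp.prems o by (auto intro: good_gens_upto_mono simp: ptgt_pbdj pdim_pbdj)
  then have u: "nf P u = nf P u'" "wf_term P u" and v: "nf P v = nf P v'" "wf_term P v"
    and "nf P (ptgt P i u) = nf P (psrc P i v)"
    using cmp.IH by auto
  then have "nbdj P True i (nf P u) = nbdj P False i (nf P v)"
    using nf_pbdj_upto(1)[OF o g(1) u(2), of True i] nf_pbdj_upto(1)[OF o g(2) v(2), of False i]
    by (simp add: ptgt_pbdj psrc_pbdj)
  moreover have "pdim P u = pdim P u'" "pdim P v = pdim P v'" using u v ndim_nf by metis+
  ultimately show ?case using u v cmp.IH cmp.hyps g by (auto simp: comp_dims_def)
next
  case (sym x y) then show ?case using pceq_pdim[OF o] by metis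
next
  case (trans x y z) then show ?case using pceq_pdim[OF o] by metis
next
  case (unit_l u i)
  have "pdim P (psrc P i u) = i" using unit_l.hyps o by (simp add: psrc_pbdj pdim_pbdj)
  then show ?case using unit_l nf_unit_left[OF o] by auto
next
  case (unit_r u i)
  have "pdim P (ptgt P i u) = i" using unit_r.hyps o by (simp add: ptgt_pbdj pdim_pbdj)
  then show ?case using unit_r nf_unit_right[OF o] by auto
next
  case (assoc i u v w)
  have "pdim P (Cmp i u (Cmp i v w)) = pdim P (Cmp i (Cmp i u v) w)" by (simp add: max.assoc)
  then show ?case using assoc nf_Cmp_assoc by auto
next
  case (dist_l i j u v w)
  have "pdim P (Cmp j (Cmp i u v) (Cmp i u w)) = pdim P (Cmp i u (Cmp j v w))" by (simp add: max_def)
  then show ?case using dist_l nf_Cmp_distrib_left[OF dist_l.hyps(1)] by auto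
next
  case (dist_r i j v w u)
  have "pdim P (Cmp j (Cmp i v u) (Cmp i w u)) = pdim P (Cmp i (Cmp j v w) u)" by (simp add: max_def)
  then show ?case using dist_r nf_Cmp_distrib_right[OF dist_r.hyps(1)] by auto
next
  case (id_l i u v)
  have "pdim P (Idt (Cmp i u v)) = pdim P (Cmp i u (Idt v))"
    using pceq_pdim[OF o pceq.id_l[OF id_l.hyps]] ..
  then show ?case using id_l nf_Cmp_Idt_right by auto
next
  case (id_r i v u)
  have "pdim P (Idt (Cmp i v u)) = pdim P (Cmp i (Idt v) u)"
    using pceq_pdim[OF o pceq.id_r[OF id_r.hyps]] ..
  then show ?case using id_r nf_Cmp_Idt_left by auto
qed

lemma good_gen_Suc:
  assumes o: "omega_polygraph P" and IH: "good_gens_upto P n" and ge: "gdim P g = Suc n"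
  shows "good_gen P g"
proof -
  have pc: "pceq P (gsrc P g) (gsrc P g)" "pceq P (gtgt P g) (gtgt P g)"
    using omega_dims(3,4)[OF o] ge unfolding pcell_def by auto
  have ds: "pdim P (gsrc P g) = n" "pdim P (gtgt P g) = n" using o ge by (auto simp: omega_dims)
  have ws: "wf_term P (gsrc P g)" "wf_term P (gtgt P g)"
    using pceq_nf_upto[OF o pc(1)] pceq_nf_upto[OF o pc(2)] IH ds by auto
  have "nbd P b (nf P (gsrc P g)) = nbd P b (nf P (gtgt P g))" if g2: "2 \<le> gdim P g" for b
  proof -
    have pq: "pceq P (pbdj P b (gdim P g - 2) (gsrc P g)) (pbdj P b (gdim P g - 2) (gtgt P g))"
      using o g2 by (cases b) (auto simp: omega_polygraph_def psrc_pbdj ptgt_pbdj)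
    have "good_gens_upto P (pdim P (pbdj P b (gdim P g - 2) (gsrc P g)))"
      using IH o ds by (auto intro: good_gens_upto_mono simp: pdim_pbdj)
    then have "nf P (pbdj P b (gdim P g - 2) (gsrc P g)) = nf P (pbdj P b (gdim P g - 2) (gtgt P g))"
      using pceq_nf_upto[OF o pq] by auto
    then have "nbdj P b (gdim P g - 2) (nf P (gsrc P g)) = nbdj P b (gdim P g - 2) (nf P (gtgt P g))"
      using nf_pbdj_upto(1)[OF o _ ws(1)] nf_pbdj_upto(1)[OF o _ ws(2)] IH ds by metis
    moreover have "gdim P g - 2 = n - 1" "0 < n" using ge g2 by auto
    ultimately show ?thesis using nbdj_one[of P "nf P (gsrc P g)" b] nbdj_one[of P "nf P (gtgt P g)" b] ds
      by simp
  qed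
  then show ?thesis using ws by (auto simp: good_gen_def)
qed

lemma good_gens_all: "omega_polygraph P \<Longrightarrow> good_gens_upto P n"
proof (induction n)
  case 0 then show ?case by (auto simp: good_gens_upto_def good_gen_def)
next
  case (Suc n)
  then show ?case using good_gen_Suc by (fastforce simp: good_gens_upto_def le_Suc_eq)
qed

lemma pceq_nf:
  assumes o: "omega_polygraph P" and p: "pceq P x y"
  shows "nf P x = nf P y" "wf_term P x" "wf_term P y"
  using pceq_nf_upto[OF o p good_gens_all[OF o, of "pdim P x"]] by auto

lemma nf_pbdj:
  assumes o: "omega_polygraph P" and w: "wf_term P x"
  shows "nf P (pbdj P b j x) = nbdj P b j (nf P x)" "wf_term P (pbdj P b j x)"
  using nf_pbdj_upto[OF o good_gens_all[OF o] w] by auto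

lemma nbdj_nbdj:
  assumes o: "omega_polygraph P" and w: "wf_term P x" and ij: "i < j"
  shows "nbdj P b' i (nbdj P b j (nf P x)) = nbdj P b' i (nf P x)"
  using nbdj_nbdj_upto[OF o good_gens_all[OF o] w ij] .

section \<open>Completeness of normalization\<close>

text \<open>Completeness is proved by induction on the dimension: the equations of \<open>pceq\<close> can
  only be applied to composites whose boundaries are already known to be equivalent.\<close>

definition faithful_below :: "('g,'x) polygraph_scheme \<Rightarrow> nat \<Rightarrow> bool" where
  "faithful_below P N \<longleftrightarrow>
    (\<forall>x y. pcell P x \<longrightarrow> pcell P y \<longrightarrow> pdim P x < N \<longrightarrow> nf P x = nf P y \<longrightarrow> pceq P x y)"

lemma pcell_wf_term: "omega_polygraph P \<Longrightarrow> pcell P x \<Longrightarrow> wf_term P x"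
  unfolding pcell_def using pceq_nf by blast

lemma pceq_boundary_if_wf_term:
  assumes o: "omega_polygraph P" and fb: "faithful_below P N" and i: "i < N"
    and cells: "\<And>y. wf_term P y \<Longrightarrow> pdim P y \<le> i \<Longrightarrow> pcell P y"
    and w: "wf_term P (Cmp i u v)"
  shows "pceq P (ptgt P i u) (psrc P i v)"
proof -
  have wu: "wf_term P u" and wv: "wf_term P v"
    and c: "nbdj P True i (nf P u) = nbdj P False i (nf P v)" using w by auto
  have d: "pdim P (ptgt P i u) \<le> i" "pdim P (psrc P i v) \<le> i"
    using o by (auto simp: ptgt_pbdj psrc_pbdj pdim_pbdj)
  moreover have "pcell P (ptgt P i u)" "pcell P (psrc P i v)"
    using cells nf_pbdj(2)[OF o] wu wv d by (auto simp: ptgt_pbdj psrc_pbdj)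
  moreover have "nf P (ptgt P i u) = nf P (psrc P i v)"
    using nf_pbdj(1)[OF o] wu wv c by (simp add: ptgt_pbdj psrc_pbdj)
  ultimately show ?thesis using fb i by (auto simp: faithful_below_def)
qed

lemma wf_term_pcell:
  assumes o: "omega_polygraph P"
  shows "faithful_below P M \<Longrightarrow> wf_term P y \<Longrightarrow> pdim P y \<le> M \<Longrightarrow> pcell P y"
proof (induction M arbitrary: y rule: less_induct)
  case (less M)
  have "wf_term P y \<Longrightarrow> pdim P y \<le> M \<Longrightarrow> pcell P y" for y
  proof (induction y)
    case (Gen g) then show ?case by (simp add: pcell_def pceq.gen)
  next
    case (Idt u) then show ?case by (simp add: pcell_def pceq.idt)
  next
    case (Cmp i u v)
    have wd: "comp_dims P i u v" using Cmp.prems by simp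
    have iM: "i < M" using wd Cmp.prems(2) by (auto simp: comp_dims_def)
    have "faithful_below P i" using less.prems(1) iM by (auto simp: faithful_below_def)
    then have "pceq P (ptgt P i u) (psrc P i v)"
      using pceq_boundary_if_wf_term[OF o less.prems(1) iM less.IH[OF iM] Cmp.prems(1)] by blast
    then show ?case using Cmp wd unfolding pcell_def comp_dims_def by (auto intro: pceq.cmp)
  qed
  then show ?case using less.prems by blast
qed

lemma pcell_Cmp_boundary:
  assumes o: "omega_polygraph P" and fb: "faithful_below P N" and p: "pcell P (Cmp i X Y)"
    and d: "pdim P (Cmp i X Y) \<le> N"
  shows "pceq P (ptgt P i X) (psrc P i Y)"
proof -
  have w: "wf_term P (Cmp i X Y)" using pcell_wf_term[OF o p] .
  then have iN: "i < N" using d by (auto simp: comp_dims_def)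
  then have "faithful_below P i" using fb by (auto simp: faithful_below_def)
  then have "pcell P y" if "wf_term P y" "pdim P y \<le> i" for y using wf_term_pcell[OF o _ that] by blast
  then show ?thesis using pceq_boundary_if_wf_term[OF o fb iN _ w] by blast
qed

lemma pceq_Cmp_cong:
  assumes o: "omega_polygraph P" and fb: "faithful_below P N" and p: "pcell P (Cmp i X Y)" and d: "pdim P (Cmp i X Y) \<le> N"
    and x: "pceq P X X'" and y: "pceq P Y Y'"
  shows "pceq P (Cmp i X Y) (Cmp i X' Y')"
  using pcell_CmpD(3)[OF o p] pcell_Cmp_boundary[OF o fb p d] x y unfolding comp_dims_def by (auto intro: pceq.cmp)

lemma pceq_unit_left:
  assumes o: "omega_polygraph P" and fb: "faithful_below P N" and p: "pcell P (Cmp i (Idt z) u)"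
    and d: "pdim P (Cmp i (Idt z) u) \<le> N" and dz: "pdim P z = i"
  shows "pceq P (Cmp i (Idt z) u) u"
proof -
  have i1: "pceq P (ptgt P i (Idt z)) (psrc P i u)" using pcell_Cmp_boundary[OF o fb p d] .
  have "ptgt P i (Idt z) = z" using dz by (simp add: ptgt_def)
  then have zz: "pceq P z (psrc P i u)" using i1 by simp
  have pu: "pcell P u" and wd: "comp_dims P i (Idt z) u" using pcell_CmpD[OF o p] by auto
  have iu: "i < pdim P u" using wd dz by (auto simp: comp_dims_def)
  have e1: "pceq P (Cmp i (Idt z) u) (Cmp i (Idt (psrc P i u)) u)"
    using pceq_Cmp_cong[OF o fb p d] zz pu by (auto simp: pcell_def intro: pceq.idt)
  have "pceq P (Cmp i (Idt (psrc P i u)) u) u"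
    using pu iu pceq_pcell_right[OF e1] by (auto simp: pcell_def intro: pceq.unit_l)
  then show ?thesis using e1 by (rule pceq.trans[rotated])
qed

lemma pceq_unit_right:
  assumes o: "omega_polygraph P" and fb: "faithful_below P N" and p: "pcell P (Cmp i u (Idt z))"
    and d: "pdim P (Cmp i u (Idt z)) \<le> N" and dz: "pdim P z = i"
  shows "pceq P (Cmp i u (Idt z)) u"
proof -
  have i1: "pceq P (ptgt P i u) (psrc P i (Idt z))" using pcell_Cmp_boundary[OF o fb p d] .
  have "psrc P i (Idt z) = z" using dz by (simp add: psrc_def)
  then have zz: "pceq P z (ptgt P i u)" using i1 by (simp add: pceq.sym)
  have pu: "pcell P u" and wd: "comp_dims P i u (Idt z)" using pcell_CmpD[OF o p] by auto
  have iu: "i < pdim P u" using wd dz by (auto simp: comp_dims_def)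
  have e1: "pceq P (Cmp i u (Idt z)) (Cmp i u (Idt (ptgt P i u)))"
    using pceq_Cmp_cong[OF o fb p d] zz pu by (auto simp: pcell_def intro: pceq.idt)
  have "pceq P (Cmp i u (Idt (ptgt P i u))) u"
    using pu iu pceq_pcell_right[OF e1] by (auto simp: pcell_def intro: pceq.unit_r)
  then show ?thesis using e1 by (rule pceq.trans[rotated])
qed

lemma pceq_Idt_right:
  assumes o: "omega_polygraph P" and fb: "faithful_below P N" and p: "pcell P (Cmp i u (Idt v))"
    and d: "pdim P (Cmp i u (Idt v)) \<le> N" and le: "pdim P u \<le> pdim P v"
  shows "pceq P (Cmp i u (Idt v)) (Idt (Cmp i u v))"
proof -
  have w: "wf_term P (Cmp i u (Idt v))" using pcell_wf_term[OF o p] .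
  then have wu: "wf_term P u" and wv: "wf_term P v" and wd: "comp_dims P i u (Idt v)"
    and c: "nbdj P True i (nf P u) = nbdj P False i (NId (nf P v))" by auto
  have wd2: "comp_dims P i u v" using wd le by (auto simp: comp_dims_def)
  have "i \<le> ndim P (nf P v)" using wd2 le by (auto simp: comp_dims_def)
  then have c2: "nbdj P True i (nf P u) = nbdj P False i (nf P v)" using c by (simp add: nbdj_NId)
  have "wf_term P (Idt (Cmp i u v))" using wu wv wd2 c2 by simp
  moreover have "pdim P (Idt (Cmp i u v)) \<le> N" using d le by simp
  ultimately have "pcell P (Idt (Cmp i u v))" using wf_term_pcell[OF o fb] by blast
  then show ?thesis using p by (auto simp: pcell_def intro: pceq.id_l)
qed

lemma pceq_Idt_left:
  assumes o: "omega_polygraph P" and fb: "faithful_below P N" and p: "pcell P (Cmp i (Idt v) u)"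
    and d: "pdim P (Cmp i (Idt v) u) \<le> N" and le: "pdim P u \<le> pdim P v"
  shows "pceq P (Cmp i (Idt v) u) (Idt (Cmp i v u))"
proof -
  have w: "wf_term P (Cmp i (Idt v) u)" using pcell_wf_term[OF o p] .
  then have wu: "wf_term P u" and wv: "wf_term P v" and wd: "comp_dims P i (Idt v) u"
    and c: "nbdj P True i (NId (nf P v)) = nbdj P False i (nf P u)" by auto
  have wd2: "comp_dims P i v u" using wd le by (auto simp: comp_dims_def)
  have "i \<le> ndim P (nf P v)" using wd2 le by (auto simp: comp_dims_def)
  then have c2: "nbdj P True i (nf P v) = nbdj P False i (nf P u)" using c by (simp add: nbdj_NId)
  have "wf_term P (Idt (Cmp i v u))" using wu wv wd2 c2 by simp
  moreover have "pdim P (Idt (Cmp i v u)) \<le> N" using d le by simp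
  ultimately have "pcell P (Idt (Cmp i v u))" using wf_term_pcell[OF o fb] by blast
  then show ?thesis using p by (auto simp: pcell_def intro: pceq.id_r)
qed

lemma reassoc_dims: "0 < (a::nat) \<Longrightarrow> 0 < b \<Longrightarrow> 0 < c \<Longrightarrow> i = min a b - 1 \<Longrightarrow> i = min (max a b) c - 1 \<Longrightarrow>
  i = min b c - 1 \<and> i = min a (max b c) - 1"
  by (simp add: min_def max_def split: if_splits; linarith)
lemma distrib_dims_bounds: "0 < (a::nat) \<Longrightarrow> 0 < b \<Longrightarrow> 0 < c \<Longrightarrow> j = min b c - 1 \<Longrightarrow> i = min a (max b c) - 1 \<Longrightarrow> i < j \<Longrightarrow>
  a \<le> j \<and> j < b \<and> j < c \<and> i = a - 1"
  by (simp add: min_def max_def split: if_splits; linarith)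

lemma pceq_assoc:
  assumes o: "omega_polygraph P" and fb: "faithful_below P N" and p: "pcell P (Cmp i (Cmp i u v) w)"
    and d: "pdim P (Cmp i (Cmp i u v) w) \<le> N"
  shows "pceq P (Cmp i (Cmp i u v) w) (Cmp i u (Cmp i v w))"
proof -
  have W: "wf_term P (Cmp i (Cmp i u v) w)" using pcell_wf_term[OF o p] .
  then have wuv: "wf_term P (Cmp i u v)" and wu: "wf_term P u" and wv: "wf_term P v" and ww: "wf_term P w"
    and wd1: "comp_dims P i u v" and wd2: "comp_dims P i (Cmp i u v) w"
    and c1: "nbdj P True i (nf P u) = nbdj P False i (nf P v)"
    and c2: "nbdj P True i (nf P (Cmp i u v)) = nbdj P False i (nf P w)"
    by (simp_all del: nf.simps)
  have dd: "0 < pdim P u" "0 < pdim P v" "0 < pdim P w" "i = min (pdim P u) (pdim P v) - 1"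
      "i = min (max (pdim P u) (pdim P v)) (pdim P w) - 1"
    using wd1 wd2 by (simp_all add: comp_dims_def)
  note ar = reassoc_dims[OF dd]
  have wd3: "comp_dims P i v w" "comp_dims P i u (Cmp i v w)" using ar dd by (simp_all add: comp_dims_def)
  have "i < min (pdim P u) (pdim P v)" using dd(1,2,4) by (simp add: min_def)
  then have "pbdj P True i (Cmp i u v) = pbdj P True i v" using pbdj_Cmp_low[OF o wd1, of i True] by simp
  then have c3: "nbdj P True i (nf P v) = nbdj P False i (nf P w)"
    using c2 nf_pbdj(1)[OF o wuv, of True i] nf_pbdj(1)[OF o wv, of True i] by simp
  have wvw: "wf_term P (Cmp i v w)" using wv ww wd3 c3 by simp
  have "i < min (pdim P v) (pdim P w)" using ar dd(1,2,3) by (simp add: min_def)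
  then have "pbdj P False i (Cmp i v w) = pbdj P False i v" using pbdj_Cmp_low[OF o wd3(1), of i False] by simp
  then have c4: "nbdj P True i (nf P u) = nbdj P False i (nf P (Cmp i v w))"
    using c1 nf_pbdj(1)[OF o wvw, of False i] nf_pbdj(1)[OF o wv, of False i] by simp
  have "wf_term P (Cmp i u (Cmp i v w))" using wu wvw wd3 c4 by (simp del: nf.simps)
  moreover have "pdim P (Cmp i u (Cmp i v w)) \<le> N" using d by (simp add: max.assoc)
  ultimately have "pcell P (Cmp i u (Cmp i v w))" using wf_term_pcell[OF o fb] by blast
  then show ?thesis using p unfolding pcell_def by (rule pceq.assoc[rotated])
qed

lemma pceq_distrib_left:
  assumes o: "omega_polygraph P" and fb: "faithful_below P N" and ij: "i < j" and p: "pcell P (Cmp i u (Cmp j v w))"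
    and d: "pdim P (Cmp i u (Cmp j v w)) \<le> N"
  shows "pceq P (Cmp i u (Cmp j v w)) (Cmp j (Cmp i u v) (Cmp i u w))"
proof -
  have W: "wf_term P (Cmp i u (Cmp j v w))" using pcell_wf_term[OF o p] .
  then have wvw: "wf_term P (Cmp j v w)" and wu: "wf_term P u" and wv: "wf_term P v" and ww: "wf_term P w"
    and wdj: "comp_dims P j v w" and wdi: "comp_dims P i u (Cmp j v w)"
    and cj: "nbdj P True j (nf P v) = nbdj P False j (nf P w)"
    and ci: "nbdj P True i (nf P u) = nbdj P False i (nf P (Cmp j v w))"
    by (simp_all del: nf.simps)
  have dd: "0 < pdim P u" "0 < pdim P v" "0 < pdim P w" "j = min (pdim P v) (pdim P w) - 1"
      "i = min (pdim P u) (max (pdim P v) (pdim P w)) - 1"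
    using wdj wdi by (simp_all add: comp_dims_def)
  note ar = distrib_dims_bounds[OF dd ij]
  have wd: "comp_dims P i u v" "comp_dims P i u w" using ar dd by (simp_all add: comp_dims_def)
  have "i < min (pdim P v) (pdim P w)" using ar ij by simp
  then have "pbdj P False i (Cmp j v w) = pbdj P False i v" using pbdj_Cmp_low[OF o wdj, of i False] by simp
  then have cA: "nbdj P True i (nf P u) = nbdj P False i (nf P v)"
    using ci nf_pbdj(1)[OF o wvw, of False i] nf_pbdj(1)[OF o wv, of False i] by simp
  have "nbdj P False i (nf P v) = nbdj P False i (nf P w)"
    using nbdj_nbdj[OF o wv ij, of False True] nbdj_nbdj[OF o ww ij, of False False] cj by metis
  then have cB: "nbdj P True i (nf P u) = nbdj P False i (nf P w)" using cA by simp
  have wuv: "wf_term P (Cmp i u v)" and wuw: "wf_term P (Cmp i u w)" using wu wv ww wd cA cB by simp_all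
  have wd2: "comp_dims P j (Cmp i u v) (Cmp i u w)" using ar dd by (simp add: comp_dims_def max_def)
  have b1: "pbdj P True j (Cmp i u v) = Cmp i u (pbdj P True j v)"
    using pbdj_Cmp_mid[OF o wd(1)] ar dd by (simp add: pbdj_triv)
  have b2: "pbdj P False j (Cmp i u w) = Cmp i u (pbdj P False j w)"
    using pbdj_Cmp_mid[OF o wd(2)] ar dd by (simp add: pbdj_triv)
  have cC: "nbdj P True j (nf P (Cmp i u v)) = nbdj P False j (nf P (Cmp i u w))"
    using nf_pbdj(1)[OF o wuv, of True j] nf_pbdj(1)[OF o wuw, of False j] b1 b2
      nf_pbdj(1)[OF o wv, of True j] nf_pbdj(1)[OF o ww, of False j] cj by simp
  have "wf_term P (Cmp j (Cmp i u v) (Cmp i u w))" using wuv wuw wd2 cC by (simp del: nf.simps)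
  moreover have "pdim P (Cmp j (Cmp i u v) (Cmp i u w)) \<le> N" using d by simp
  ultimately have "pcell P (Cmp j (Cmp i u v) (Cmp i u w))" using wf_term_pcell[OF o fb] by blast
  then show ?thesis using p ij unfolding pcell_def by (intro pceq.dist_l)
qed

lemma pceq_distrib_right:
  assumes o: "omega_polygraph P" and fb: "faithful_below P N" and ij: "i < j" and p: "pcell P (Cmp i (Cmp j v w) u)"
    and d: "pdim P (Cmp i (Cmp j v w) u) \<le> N"
  shows "pceq P (Cmp i (Cmp j v w) u) (Cmp j (Cmp i v u) (Cmp i w u))"
proof -
  have W: "wf_term P (Cmp i (Cmp j v w) u)" using pcell_wf_term[OF o p] .
  then have wvw: "wf_term P (Cmp j v w)" and wu: "wf_term P u" and wv: "wf_term P v" and ww: "wf_term P w"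
    and wdj: "comp_dims P j v w" and wdi: "comp_dims P i (Cmp j v w) u"
    and cj: "nbdj P True j (nf P v) = nbdj P False j (nf P w)"
    and ci: "nbdj P True i (nf P (Cmp j v w)) = nbdj P False i (nf P u)"
    by (simp_all del: nf.simps)
  have dd: "0 < pdim P u" "0 < pdim P v" "0 < pdim P w" "j = min (pdim P v) (pdim P w) - 1"
      "i = min (pdim P u) (max (pdim P v) (pdim P w)) - 1"
    using wdj wdi by (simp_all add: comp_dims_def min.commute)
  note ar = distrib_dims_bounds[OF dd ij]
  have wd: "comp_dims P i v u" "comp_dims P i w u" using ar dd by (simp_all add: comp_dims_def)
  have "i < min (pdim P v) (pdim P w)" using ar ij by simp
  then have "pbdj P True i (Cmp j v w) = pbdj P True i w" using pbdj_Cmp_low[OF o wdj, of i True] by simp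
  then have cB: "nbdj P True i (nf P w) = nbdj P False i (nf P u)"
    using ci nf_pbdj(1)[OF o wvw, of True i] nf_pbdj(1)[OF o ww, of True i] by simp
  have "nbdj P True i (nf P v) = nbdj P True i (nf P w)"
    using nbdj_nbdj[OF o wv ij, of True True] nbdj_nbdj[OF o ww ij, of True False] cj by metis
  then have cA: "nbdj P True i (nf P v) = nbdj P False i (nf P u)" using cB by simp
  have wvu: "wf_term P (Cmp i v u)" and wwu: "wf_term P (Cmp i w u)" using wu wv ww wd cA cB by simp_all
  have wd2: "comp_dims P j (Cmp i v u) (Cmp i w u)" using ar dd by (simp add: comp_dims_def max_def)
  have b1: "pbdj P True j (Cmp i v u) = Cmp i (pbdj P True j v) u"
    using pbdj_Cmp_mid[OF o wd(1)] ar dd by (simp add: pbdj_triv)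
  have b2: "pbdj P False j (Cmp i w u) = Cmp i (pbdj P False j w) u"
    using pbdj_Cmp_mid[OF o wd(2)] ar dd by (simp add: pbdj_triv)
  have cC: "nbdj P True j (nf P (Cmp i v u)) = nbdj P False j (nf P (Cmp i w u))"
    using nf_pbdj(1)[OF o wvu, of True j] nf_pbdj(1)[OF o wwu, of False j] b1 b2
      nf_pbdj(1)[OF o wv, of True j] nf_pbdj(1)[OF o ww, of False j] cj by simp
  have "wf_term P (Cmp j (Cmp i v u) (Cmp i w u))" using wvu wwu wd2 cC by (simp del: nf.simps)
  moreover have "pdim P (Cmp j (Cmp i v u) (Cmp i w u)) \<le> N" using d by simp
  ultimately have "pcell P (Cmp j (Cmp i v u) (Cmp i w u))" using wf_term_pcell[OF o fb] by blast
  then show ?thesis using p ij unfolding pcell_def by (intro pceq.dist_r)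
qed

subsection \<open>Reading normal forms back as terms\<close>

fun cmp_chain :: "nat \<Rightarrow> 'g pterm list \<Rightarrow> 'g pterm" where
  "cmp_chain j [] = undefined"
| "cmp_chain j [t] = t"
| "cmp_chain j (t # ts) = Cmp j t (cmp_chain j ts)"

fun read_whisk :: "'g whisk \<Rightarrow> 'g pterm" where
  "read_whisk (WGen g) = Gen g"
| "read_whisk (Whisk L W R) = cmp_chain (depth W) (map read_whisk L @ read_whisk W # map read_whisk R)"

fun readback :: "('g,'x) polygraph_scheme \<Rightarrow> 'g nform \<Rightarrow> 'g pterm" where
  "readback P (NGen g) = Gen g"
| "readback P (NId x) = Idt (readback P x)"
| "readback P (NWord ws) = cmp_chain (ndim P (NWord ws) - 1) (map read_whisk ws)"

lemma cmp_chain_Cons: "ts \<noteq> [] \<Longrightarrow> cmp_chain j (t # ts) = Cmp j t (cmp_chain j ts)"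
  by (cases ts) auto

lemma cmp_chain_append: "ys \<noteq> [] \<Longrightarrow> cmp_chain j (xs @ ys) = foldr (Cmp j) xs (cmp_chain j ys)"
  by (induction xs) (auto simp: cmp_chain_Cons)

lemma pdim_cmp_chain: "ts \<noteq> [] \<Longrightarrow> pdim P (cmp_chain j ts) = Max (pdim P ` set ts)"
  by (induction j ts rule: cmp_chain.induct) auto

lemma pdim_read_whisk: "whisk_ok P w \<Longrightarrow> pdim P (read_whisk w) = gdim P (core w)"
proof (induction w)
  case (WGen g) then show ?case by simp
next
  case (Whisk L W R)
  have "pdim P (read_whisk x) = Suc (depth W)" if "x \<in> set L \<union> set R" for x
    using Whisk that by auto
  moreover have "pdim P (read_whisk W) = gdim P (core W)" "Suc (depth W) < gdim P (core W)"
    using Whisk by auto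
  ultimately show ?case by (auto simp: pdim_cmp_chain intro!: Max_eqI)
qed

lemma pdim_readback: "nform_ok P X \<Longrightarrow> pdim P (readback P X) = ndim P X"
proof (induction X)
  case (NWord ws)
  then have "ws \<noteq> []" "\<forall>w\<in>set ws. whisk_ok P w \<and> gdim P (core w) = ndim P (NWord ws)"
    by (auto simp: word_ok_def)
  then have "pdim P ` set (map read_whisk ws) = {ndim P (NWord ws)}"
    by (cases ws) (auto simp: pdim_read_whisk)
  then show ?case using \<open>ws \<noteq> []\<close> by (simp add: pdim_cmp_chain)
qed auto

lemma nf_cmp_chain: "ws \<noteq> [] \<Longrightarrow> (\<forall>w\<in>set ws. nf P (f w) = NWord [w] \<and> gdim P (core w) = n) \<Longrightarrow>
   nf P (cmp_chain j (map f ws)) = NWord ws"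
proof (induction ws)
  case Nil then show ?case by simp
next
  case (Cons w ws)
  show ?case
  proof (cases "ws = []")
    case True then show ?thesis using Cons by simp
  next
    case False
    then have "nf P (cmp_chain j (map f ws)) = NWord ws" using Cons by simp
    moreover obtain w' ws' where "ws = w' # ws'" using False by (cases ws) auto
    ultimately show ?thesis using Cons False by (simp add: cmp_chain_Cons ncomp_NWord_NWord_eq)
  qed
qed

lemma nf_foldr_Cmp_read_whisk:
  assumes "\<forall>l\<in>set L. nf P (read_whisk l) = NWord [l] \<and> gdim P (core l) = Suc d"
    and "nf P T = NWord [w]" "Suc d < gdim P (core w)"
  shows "nf P (foldr (Cmp d) (map read_whisk L) T) = NWord [lwhisk L (Suc d) w]"
  using assms by (induction L) (auto simp: ncomp_NWord_nlwhisk lwhisk_app)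

lemma nf_cmp_chain_Cons_read_whisk:
  assumes "nf P T = NWord [w]" "Suc d < gdim P (core w)"
    and "\<forall>r\<in>set R. nf P (read_whisk r) = NWord [r] \<and> gdim P (core r) = Suc d"
  shows "nf P (cmp_chain d (T # map read_whisk R)) = NWord [rwhisk R (Suc d) w]"
proof (cases R)
  case Nil then show ?thesis using assms by simp
next
  case (Cons r R')
  then have "nf P (cmp_chain d (map read_whisk R)) = NWord R"
    using nf_cmp_chain[of R P read_whisk "Suc d"] assms(3) by simp
  then show ?thesis using assms Cons by (simp add: cmp_chain_Cons ncomp_NWord_nrwhisk)
qed

lemma nf_read_whisk: "whisk_ok P w \<Longrightarrow> nf P (read_whisk w) = NWord [pad (gdim P (core w) - 1 - depth w) w]"
proof (induction w)
  case (WGen g) then show ?case by simp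
next
  case (Whisk L W R)
  define d where "d = depth W"
  define m where "m = gdim P (core W) - 1 - Suc d"
  have lt: "Suc d < gdim P (core W)" using Whisk.prems d_def by simp
  have "gdim P (core W) - 1 - depth W = Suc m" using lt m_def d_def by simp
  then have W: "nf P (read_whisk W) = NWord [pad (Suc m) W]" using Whisk by (simp del: pad.simps)
  have LR: "\<forall>x\<in>set L \<union> set R. nf P (read_whisk x) = NWord [x] \<and> gdim P (core x) = Suc d"
    using Whisk d_def by auto
  have "rwhisk R (Suc d) (pad (Suc m) W) = pad m (Whisk [] W R)"
    using d_def by (simp add: pad_Suc_inner rwhisk_pad del: pad.simps)
  then have "nf P (cmp_chain d (read_whisk W # map read_whisk R)) = NWord [pad m (Whisk [] W R)]"
    using nf_cmp_chain_Cons_read_whisk[OF W] LR lt by simp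
  moreover have "lwhisk L (Suc d) (pad m (Whisk [] W R)) = pad m (Whisk L W R)"
    using d_def by (simp add: lwhisk_pad del: pad.simps)
  ultimately have "nf P (read_whisk (Whisk L W R)) = NWord [pad m (Whisk L W R)]"
    using nf_foldr_Cmp_read_whisk[of L P d] LR lt d_def by (simp add: cmp_chain_append)
  moreover have "gdim P (core (Whisk L W R)) - 1 - depth (Whisk L W R) = m" using m_def d_def by simp
  ultimately show ?case by simp
qed

lemma nf_readback: "nform_ok P X \<Longrightarrow> nf P (readback P X) = X"
proof (induction X)
  case (NWord ws)
  have ne: "ws \<noteq> []" and wk: "word_ok P (ndim P (NWord ws)) ws" using NWord.prems by auto
  have "\<forall>w\<in>set ws. nf P (read_whisk w) = NWord [w] \<and> gdim P (core w) = ndim P (NWord ws)"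
    using wk nf_read_whisk by (fastforce simp: word_ok_def)
  then show ?case using nf_cmp_chain[OF ne] by simp
qed auto

lemma read_whisk_pad: "read_whisk (pad m w) = read_whisk w"
  by (induction m) auto

lemma pcell_refl: "pcell P x \<Longrightarrow> pceq P x x" by (simp add: pcell_def)

lemma pceq_chain_append:
  assumes o: "omega_polygraph P" and fb: "faithful_below P N"
  shows "xs \<noteq> [] \<Longrightarrow> ys \<noteq> [] \<Longrightarrow> pcell P (Cmp i (cmp_chain i xs) (cmp_chain i ys)) \<Longrightarrow>
    pdim P (Cmp i (cmp_chain i xs) (cmp_chain i ys)) \<le> N \<Longrightarrow>
    pceq P (Cmp i (cmp_chain i xs) (cmp_chain i ys)) (cmp_chain i (xs @ ys))"
proof (induction xs)
  case Nil then show ?case by simp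
next
  case (Cons x xs)
  show ?case
  proof (cases "xs = []")
    case True
    then show ?thesis using Cons.prems by (simp add: cmp_chain_Cons pcell_refl)
  next
    case False
    define X' where "X' = cmp_chain i xs"
    define Y where "Y = cmp_chain i ys"
    have c: "cmp_chain i (x # xs) = Cmp i x X'" using False by (simp add: cmp_chain_Cons X'_def)
    have p1: "pcell P (Cmp i (Cmp i x X') Y)" using Cons.prems c by (simp add: Y_def)
    have d1: "pdim P (Cmp i (Cmp i x X') Y) \<le> N" using Cons.prems c by (simp add: Y_def)
    have e1: "pceq P (Cmp i (Cmp i x X') Y) (Cmp i x (Cmp i X' Y))" using pceq_assoc[OF o fb p1 d1] .
    have p2: "pcell P (Cmp i x (Cmp i X' Y))" using pceq_pcell_right[OF e1] .
    have d2: "pdim P (Cmp i x (Cmp i X' Y)) \<le> N" using d1 pceq_pdim[OF o e1] by simp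
    have p3: "pcell P (Cmp i X' Y)" "pcell P x" using pcell_CmpD[OF o p2] by auto
    have d3: "pdim P (Cmp i X' Y) \<le> N" using d2 by simp
    have e2: "pceq P (Cmp i X' Y) (cmp_chain i (xs @ ys))"
      using Cons.IH[OF False Cons.prems(2)] p3 d3 by (simp add: X'_def Y_def)
    have e3: "pceq P (Cmp i x (Cmp i X' Y)) (Cmp i x (cmp_chain i (xs @ ys)))"
      using pceq_Cmp_cong[OF o fb p2 d2 pcell_refl[OF p3(2)] e2] .
    have "Cmp i x (cmp_chain i (xs @ ys)) = cmp_chain i ((x # xs) @ ys)" using False by (simp add: cmp_chain_Cons)
    then show ?thesis using pceq.trans[OF e1 e3] c by (simp add: Y_def)
  qed
qed

lemma pceq_distrib_chain_left:
  assumes o: "omega_polygraph P" and fb: "faithful_below P N" and ij: "i < j"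
  shows "ws \<noteq> [] \<Longrightarrow> (\<forall>w\<in>set ws. pcell P (Cmp i A (f w)) \<longrightarrow> pdim P (Cmp i A (f w)) \<le> N \<longrightarrow>
      pceq P (Cmp i A (f w)) (g w)) \<Longrightarrow> pcell P (Cmp i A (cmp_chain j (map f ws))) \<Longrightarrow>
    pdim P (Cmp i A (cmp_chain j (map f ws))) \<le> N \<Longrightarrow> pceq P (Cmp i A (cmp_chain j (map f ws))) (cmp_chain j (map g ws))"
proof (induction ws)
  case Nil then show ?case by simp
next
  case (Cons w ws)
  show ?case
  proof (cases "ws = []")
    case True then show ?thesis using Cons.prems by simp
  next
    case False
    define F' where "F' = cmp_chain j (map f ws)"
    have c: "cmp_chain j (map f (w # ws)) = Cmp j (f w) F'" using False by (simp add: cmp_chain_Cons F'_def)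
    have p1: "pcell P (Cmp i A (Cmp j (f w) F'))" using Cons.prems c by simp
    have d1: "pdim P (Cmp i A (Cmp j (f w) F')) \<le> N" using Cons.prems c by simp
    have e1: "pceq P (Cmp i A (Cmp j (f w) F')) (Cmp j (Cmp i A (f w)) (Cmp i A F'))"
      using pceq_distrib_left[OF o fb ij p1 d1] .
    have p2: "pcell P (Cmp j (Cmp i A (f w)) (Cmp i A F'))" using pceq_pcell_right[OF e1] .
    have d2: "pdim P (Cmp j (Cmp i A (f w)) (Cmp i A F')) \<le> N" using d1 pceq_pdim[OF o e1] by simp
    have p3: "pcell P (Cmp i A (f w))" "pcell P (Cmp i A F')" using pcell_CmpD[OF o p2] by auto
    have d3: "pdim P (Cmp i A (f w)) \<le> N" "pdim P (Cmp i A F') \<le> N" using d2 by auto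
    have h1: "pceq P (Cmp i A (f w)) (g w)" using Cons.prems(2) p3 d3 by simp
    have h2: "pceq P (Cmp i A F') (cmp_chain j (map g ws))"
      using Cons.IH[OF False] Cons.prems(2) p3 d3 by (simp add: F'_def)
    have e2: "pceq P (Cmp j (Cmp i A (f w)) (Cmp i A F')) (Cmp j (g w) (cmp_chain j (map g ws)))"
      using pceq_Cmp_cong[OF o fb p2 d2 h1 h2] .
    have "Cmp j (g w) (cmp_chain j (map g ws)) = cmp_chain j (map g (w # ws))" using False by (simp add: cmp_chain_Cons)
    then show ?thesis using pceq.trans[OF e1 e2] c by simp
  qed
qed

lemma pceq_distrib_chain_right:
  assumes o: "omega_polygraph P" and fb: "faithful_below P N" and ij: "i < j"
  shows "ws \<noteq> [] \<Longrightarrow> (\<forall>w\<in>set ws. pcell P (Cmp i (f w) B) \<longrightarrow> pdim P (Cmp i (f w) B) \<le> N \<longrightarrow>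
      pceq P (Cmp i (f w) B) (g w)) \<Longrightarrow> pcell P (Cmp i (cmp_chain j (map f ws)) B) \<Longrightarrow>
    pdim P (Cmp i (cmp_chain j (map f ws)) B) \<le> N \<Longrightarrow> pceq P (Cmp i (cmp_chain j (map f ws)) B) (cmp_chain j (map g ws))"
proof (induction ws)
  case Nil then show ?case by simp
next
  case (Cons w ws)
  show ?case
  proof (cases "ws = []")
    case True then show ?thesis using Cons.prems by simp
  next
    case False
    define F' where "F' = cmp_chain j (map f ws)"
    have c: "cmp_chain j (map f (w # ws)) = Cmp j (f w) F'" using False by (simp add: cmp_chain_Cons F'_def)
    have p1: "pcell P (Cmp i (Cmp j (f w) F') B)" using Cons.prems c by simp
    have d1: "pdim P (Cmp i (Cmp j (f w) F') B) \<le> N" using Cons.prems c by simp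
    have e1: "pceq P (Cmp i (Cmp j (f w) F') B) (Cmp j (Cmp i (f w) B) (Cmp i F' B))"
      using pceq_distrib_right[OF o fb ij p1 d1] .
    have p2: "pcell P (Cmp j (Cmp i (f w) B) (Cmp i F' B))" using pceq_pcell_right[OF e1] .
    have d2: "pdim P (Cmp j (Cmp i (f w) B) (Cmp i F' B)) \<le> N" using d1 pceq_pdim[OF o e1] by simp
    have p3: "pcell P (Cmp i (f w) B)" "pcell P (Cmp i F' B)" using pcell_CmpD[OF o p2] by auto
    have d3: "pdim P (Cmp i (f w) B) \<le> N" "pdim P (Cmp i F' B) \<le> N" using d2 by auto
    have h1: "pceq P (Cmp i (f w) B) (g w)" using Cons.prems(2) p3 d3 by simp
    have h2: "pceq P (Cmp i F' B) (cmp_chain j (map g ws))"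
      using Cons.IH[OF False] Cons.prems(2) p3 d3 by (simp add: F'_def)
    have e2: "pceq P (Cmp j (Cmp i (f w) B) (Cmp i F' B)) (Cmp j (g w) (cmp_chain j (map g ws)))"
      using pceq_Cmp_cong[OF o fb p2 d2 h1 h2] .
    have "Cmp j (g w) (cmp_chain j (map g ws)) = cmp_chain j (map g (w # ws))" using False by (simp add: cmp_chain_Cons)
    then show ?thesis using pceq.trans[OF e1 e2] c by simp
  qed
qed

lemma pceq_read_lwhisk:
  assumes o: "omega_polygraph P" and fb: "faithful_below P N" and a: "a \<noteq> []" and k1: "1 \<le> k"
  shows "whisk_ok P w \<Longrightarrow> k \<le> depth w \<Longrightarrow>
    pcell P (Cmp (k-1) (cmp_chain (k-1) (map read_whisk a)) (read_whisk w)) \<Longrightarrow>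
    pdim P (Cmp (k-1) (cmp_chain (k-1) (map read_whisk a)) (read_whisk w)) \<le> N \<Longrightarrow>
    pceq P (Cmp (k-1) (cmp_chain (k-1) (map read_whisk a)) (read_whisk w)) (read_whisk (lwhisk a k w))"
proof (induction w)
  case (WGen g) then show ?case using k1 by simp
next
  case (Whisk L W R)
  define ws where "ws = L @ W # R"
  have read: "read_whisk (Whisk L W R) = cmp_chain (depth W) (map read_whisk ws)" by (simp add: ws_def)
  show ?case
  proof (cases "Suc (depth W) = k")
    case True
    then have dW: "depth W = k - 1" by simp
    have "lwhisk a k (Whisk L W R) = Whisk (a @ L) W R" using True by simp
    then have rd: "read_whisk (lwhisk a k (Whisk L W R)) =
        cmp_chain (k - 1) (map read_whisk a @ map read_whisk ws)"
      by (simp add: ws_def dW)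
    have "pceq P (Cmp (k-1) (cmp_chain (k-1) (map read_whisk a)) (cmp_chain (k-1) (map read_whisk ws)))
        (cmp_chain (k - 1) (map read_whisk a @ map read_whisk ws))"
      by (rule pceq_chain_append[OF o fb]) (use a Whisk.prems(3,4) in \<open>simp_all add: ws_def dW\<close>)
    then show ?thesis by (simp only: read rd dW)
  next
    case False
    then have lt: "k - 1 < depth W" "k < Suc (depth W)" using Whisk.prems(2) k1 by auto
    then have "lwhisk a k (Whisk L W R) =
        Whisk (map (lwhisk a k) L) (lwhisk a k W) (map (lwhisk a k) R)"
      by simp
    then have rd: "read_whisk (lwhisk a k (Whisk L W R)) =
        cmp_chain (depth W) (map (read_whisk \<circ> lwhisk a k) ws)"
      by (simp add: ws_def)
    have hyp: "\<forall>x\<in>set ws. pcell P (Cmp (k-1) (cmp_chain (k-1) (map read_whisk a)) (read_whisk x)) \<longrightarrow>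
        pdim P (Cmp (k-1) (cmp_chain (k-1) (map read_whisk a)) (read_whisk x)) \<le> N \<longrightarrow>
        pceq P (Cmp (k-1) (cmp_chain (k-1) (map read_whisk a)) (read_whisk x)) ((read_whisk \<circ> lwhisk a k) x)"
      using Whisk.IH Whisk.prems(1) lt by (auto simp: ws_def)
    have "pceq P (Cmp (k-1) (cmp_chain (k-1) (map read_whisk a)) (cmp_chain (depth W) (map read_whisk ws)))
        (cmp_chain (depth W) (map (read_whisk \<circ> lwhisk a k) ws))"
      by (rule pceq_distrib_chain_left[OF o fb lt(1) _ hyp])
        (use Whisk.prems(3,4) in \<open>simp_all add: ws_def\<close>)
    then show ?thesis by (simp only: read rd)
  qed
qed

lemma pceq_read_rwhisk:
  assumes o: "omega_polygraph P" and fb: "faithful_below P N" and b: "b \<noteq> []" and k1: "1 \<le> k"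
  shows "whisk_ok P w \<Longrightarrow> k \<le> depth w \<Longrightarrow>
    pcell P (Cmp (k-1) (read_whisk w) (cmp_chain (k-1) (map read_whisk b))) \<Longrightarrow>
    pdim P (Cmp (k-1) (read_whisk w) (cmp_chain (k-1) (map read_whisk b))) \<le> N \<Longrightarrow>
    pceq P (Cmp (k-1) (read_whisk w) (cmp_chain (k-1) (map read_whisk b))) (read_whisk (rwhisk b k w))"
proof (induction w)
  case (WGen g) then show ?case using k1 by simp
next
  case (Whisk L W R)
  define ws where "ws = L @ W # R"
  have read: "read_whisk (Whisk L W R) = cmp_chain (depth W) (map read_whisk ws)" by (simp add: ws_def)
  show ?case
  proof (cases "Suc (depth W) = k")
    case True
    then have dW: "depth W = k - 1" by simp
    have "rwhisk b k (Whisk L W R) = Whisk L W (R @ b)" using True by simp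
    then have rd: "read_whisk (rwhisk b k (Whisk L W R)) =
        cmp_chain (k - 1) (map read_whisk ws @ map read_whisk b)"
      by (simp add: ws_def dW)
    have "pceq P (Cmp (k-1) (cmp_chain (k-1) (map read_whisk ws)) (cmp_chain (k-1) (map read_whisk b)))
        (cmp_chain (k - 1) (map read_whisk ws @ map read_whisk b))"
      by (rule pceq_chain_append[OF o fb]) (use b Whisk.prems(3,4) in \<open>simp_all add: ws_def dW\<close>)
    then show ?thesis by (simp only: read rd dW)
  next
    case False
    then have lt: "k - 1 < depth W" "k < Suc (depth W)" using Whisk.prems(2) k1 by auto
    then have "rwhisk b k (Whisk L W R) =
        Whisk (map (rwhisk b k) L) (rwhisk b k W) (map (rwhisk b k) R)"
      by simp
    then have rd: "read_whisk (rwhisk b k (Whisk L W R)) =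
        cmp_chain (depth W) (map (read_whisk \<circ> rwhisk b k) ws)"
      by (simp add: ws_def)
    have hyp: "\<forall>x\<in>set ws. pcell P (Cmp (k-1) (read_whisk x) (cmp_chain (k-1) (map read_whisk b))) \<longrightarrow>
        pdim P (Cmp (k-1) (read_whisk x) (cmp_chain (k-1) (map read_whisk b))) \<le> N \<longrightarrow>
        pceq P (Cmp (k-1) (read_whisk x) (cmp_chain (k-1) (map read_whisk b))) ((read_whisk \<circ> rwhisk b k) x)"
      using Whisk.IH Whisk.prems(1) lt by (auto simp: ws_def)
    have "pceq P (Cmp (k-1) (cmp_chain (depth W) (map read_whisk ws)) (cmp_chain (k-1) (map read_whisk b)))
        (cmp_chain (depth W) (map (read_whisk \<circ> rwhisk b k) ws))"
      by (rule pceq_distrib_chain_right[OF o fb lt(1) _ hyp])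
        (use Whisk.prems(3,4) in \<open>simp_all add: ws_def\<close>)
    then show ?thesis by (simp only: read rd)
  qed
qed

lemma readback_Cmp_dims:
  assumes o: "omega_polygraph P" and cA: "nform_ok P A" and cC: "nform_ok P C"
    and p: "pcell P (Cmp i (readback P A) (readback P C))"
  shows "0 < ndim P A" "0 < ndim P C" "i = min (ndim P A) (ndim P C) - 1"
  using pcell_CmpD(3)[OF o p] pdim_readback[OF cA] pdim_readback[OF cC] by (auto simp: comp_dims_def)

lemma pceq_readback_ncomp_NId_left:
  assumes o: "omega_polygraph P" and fb: "faithful_below P N"
    and cA: "nform_ok P (NId x)" and cC: "nform_ok P C"
    and p: "pcell P (Cmp i (readback P (NId x)) (readback P C))"
    and d: "pdim P (Cmp i (readback P (NId x)) (readback P C)) \<le> N" and le: "ndim P (NId x) \<le> ndim P C"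
  shows "pceq P (Cmp i (readback P (NId x)) (readback P C)) (readback P (ncomp P (NId x) C))"
proof -
  have "pdim P (readback P x) = i" using readback_Cmp_dims[OF o cA cC p] pdim_readback cA le by simp
  then have "pceq P (Cmp i (Idt (readback P x)) (readback P C)) (readback P C)"
    using pceq_unit_left[OF o fb _ _] p d by simp
  moreover have "ncomp P (NId x) C = C" using le by (auto simp: ncomp_def)
  ultimately show ?thesis by simp
qed

lemma pceq_readback_ncomp_NId_right:
  assumes o: "omega_polygraph P" and fb: "faithful_below P N"
    and cA: "nform_ok P A" and cC: "nform_ok P (NId z)"
    and p: "pcell P (Cmp i (readback P A) (readback P (NId z)))"
    and d: "pdim P (Cmp i (readback P A) (readback P (NId z))) \<le> N" and le: "ndim P (NId z) \<le> ndim P A"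
  shows "pceq P (Cmp i (readback P A) (readback P (NId z))) (readback P (ncomp P A (NId z)))"
proof -
  have cz: "nform_ok P z" using cC by simp
  have mz: "ndim P z = i" and iA: "i < ndim P A" using readback_Cmp_dims[OF o cA cC p] le by auto
  have "nbdj P True i (nf P (readback P A)) = nbdj P False i (NId (nf P (readback P z)))"
    using pcell_wf_term[OF o p] by simp
  then have "z = nbdj P True i A" using nf_readback[OF cA] nf_readback[OF cz] mz
    by (simp add: nbdj_NId nbdj_triv)
  then have "ncomp P A (NId z) = A" using mz iA by (intro ncomp_NId_right_unit[of i P A z True])
  moreover have "pceq P (Cmp i (readback P A) (Idt (readback P z))) (readback P A)"
    using pceq_unit_right[OF o fb _ _] p d mz pdim_readback[OF cz] by simp
  ultimately show ?thesis by simp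
qed

lemma pceq_readback_ncomp_Idt_left:
  assumes o: "omega_polygraph P" and fb: "faithful_below P N"
    and cA: "nform_ok P (NId x)" and cC: "nform_ok P C"
    and p: "pcell P (Cmp i (readback P (NId x)) (readback P C))"
    and d: "pdim P (Cmp i (readback P (NId x)) (readback P C)) \<le> N" and gt: "ndim P C < ndim P (NId x)"
    and IH: "pcell P (Cmp i (readback P x) (readback P C)) \<Longrightarrow> pdim P (Cmp i (readback P x) (readback P C)) \<le> N
      \<Longrightarrow> pceq P (Cmp i (readback P x) (readback P C)) (readback P (ncomp P x C))"
  shows "pceq P (Cmp i (readback P (NId x)) (readback P C)) (readback P (ncomp P (NId x) C))"
proof -
  have le: "pdim P (readback P C) \<le> pdim P (readback P x)"
    using pdim_readback[of P C] pdim_readback[of P x] cA cC gt by simp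
  have e1: "pceq P (Cmp i (Idt (readback P x)) (readback P C)) (Idt (Cmp i (readback P x) (readback P C)))"
    using pceq_Idt_left[OF o fb _ _ le] p d by simp
  have "pcell P (Cmp i (readback P x) (readback P C))" using pcell_IdtD[OF o pceq_pcell_right[OF e1]] .
  moreover have "pdim P (Cmp i (readback P x) (readback P C)) \<le> N" using d le by simp
  ultimately have "pceq P (Idt (Cmp i (readback P x) (readback P C))) (Idt (readback P (ncomp P x C)))"
    using IH by (simp add: pceq.idt)
  moreover have "ncomp P (NId x) C = NId (ncomp P x C)" using gt by (simp add: ncomp_NId_left_nrwhisk)
  ultimately show ?thesis using pceq.trans[OF e1] by simp
qed

lemma pceq_readback_ncomp_Idt_right:
  assumes o: "omega_polygraph P" and fb: "faithful_below P N"
    and cA: "nform_ok P A" and cC: "nform_ok P (NId y)"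
    and p: "pcell P (Cmp i (readback P A) (readback P (NId y)))"
    and d: "pdim P (Cmp i (readback P A) (readback P (NId y))) \<le> N" and lt: "ndim P A < ndim P (NId y)"
    and IH: "pcell P (Cmp i (readback P A) (readback P y)) \<Longrightarrow> pdim P (Cmp i (readback P A) (readback P y)) \<le> N
      \<Longrightarrow> pceq P (Cmp i (readback P A) (readback P y)) (readback P (ncomp P A y))"
  shows "pceq P (Cmp i (readback P A) (readback P (NId y))) (readback P (ncomp P A (NId y)))"
proof -
  have le: "pdim P (readback P A) \<le> pdim P (readback P y)"
    using pdim_readback[of P A] pdim_readback[of P y] cA cC lt by simp
  have e1: "pceq P (Cmp i (readback P A) (Idt (readback P y))) (Idt (Cmp i (readback P A) (readback P y)))"
    using pceq_Idt_right[OF o fb _ _ le] p d by simp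
  have "pcell P (Cmp i (readback P A) (readback P y))" using pcell_IdtD[OF o pceq_pcell_right[OF e1]] .
  moreover have "pdim P (Cmp i (readback P A) (readback P y)) \<le> N" using d le by simp
  ultimately have "pceq P (Idt (Cmp i (readback P A) (readback P y))) (Idt (readback P (ncomp P A y)))"
    using IH by (simp add: pceq.idt)
  moreover have "ncomp P A (NId y) = NId (ncomp P A y)" using lt by (simp add: ncomp_NId_right_nlwhisk)
  ultimately show ?thesis using pceq.trans[OF e1] by simp
qed

lemma pceq_readback_ncat_words:
  assumes o: "omega_polygraph P" and fb: "faithful_below P N"
    and cA: "nform_ok P (NWord a)" and cC: "nform_ok P (NWord c)"
    and p: "pcell P (Cmp i (readback P (NWord a)) (readback P (NWord c)))"
    and d: "pdim P (Cmp i (readback P (NWord a)) (readback P (NWord c))) \<le> N"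
    and eq: "ndim P (NWord a) = ndim P (NWord c)"
  shows "pceq P (Cmp i (readback P (NWord a)) (readback P (NWord c))) (readback P (ncomp P (NWord a) (NWord c)))"
proof -
  have ne: "a \<noteq> []" "c \<noteq> []" using cA cC by auto
  have i: "i = ndim P (NWord a) - 1" "i = ndim P (NWord c) - 1" using readback_Cmp_dims[OF o cA cC p] eq by auto
  then have "pceq P (Cmp i (cmp_chain i (map read_whisk a)) (cmp_chain i (map read_whisk c)))
      (cmp_chain i (map read_whisk a @ map read_whisk c))"
    using pceq_chain_append[OF o fb] p d ne by simp
  moreover have "ncomp P (NWord a) (NWord c) = NWord (a @ c)" using eq by (simp add: ncomp_NWord_NWord_eq)
  moreover have "ndim P (NWord (a @ c)) = ndim P (NWord a)" using ne by (cases a) auto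
  ultimately show ?thesis using i by simp
qed

lemma pceq_readback_nlwhisk_words:
  assumes o: "omega_polygraph P" and fb: "faithful_below P N"
    and cA: "nform_ok P (NWord a)" and cC: "nform_ok P (NWord ws)"
    and p: "pcell P (Cmp i (readback P (NWord a)) (readback P (NWord ws)))"
    and d: "pdim P (Cmp i (readback P (NWord a)) (readback P (NWord ws))) \<le> N"
    and lt: "ndim P (NWord a) < ndim P (NWord ws)"
  shows "pceq P (Cmp i (readback P (NWord a)) (readback P (NWord ws))) (readback P (ncomp P (NWord a) (NWord ws)))"
proof -
  define k where "k = ndim P (NWord a)"
  define n where "n = ndim P (NWord ws)"
  have ane: "a \<noteq> []" and wne: "ws \<noteq> []" and wkw: "word_ok P n ws" using cA cC n_def by auto
  have k1: "1 \<le> k" and i: "i = k - 1" using readback_Cmp_dims[OF o cA cC p] lt k_def by auto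
  have ij: "k - 1 < n - 1" using lt k_def n_def k1 by simp
  have "pceq P (Cmp (k-1) (cmp_chain (k-1) (map read_whisk a)) (read_whisk w)) (read_whisk (lwhisk a k w))"
    if "w \<in> set ws" "pcell P (Cmp (k-1) (cmp_chain (k-1) (map read_whisk a)) (read_whisk w))"
      "pdim P (Cmp (k-1) (cmp_chain (k-1) (map read_whisk a)) (read_whisk w)) \<le> N" for w
  proof -
    have "whisk_ok P w" "Suc (depth w) = n" using wkw that(1) by (auto simp: word_ok_def)
    then show ?thesis using pceq_read_lwhisk[OF o fb ane k1] that lt k_def n_def by simp
  qed
  then have "pceq P (Cmp (k-1) (cmp_chain (k-1) (map read_whisk a)) (cmp_chain (n-1) (map read_whisk ws)))
      (cmp_chain (n-1) (map (\<lambda>w. read_whisk (lwhisk a k w)) ws))"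
    using pceq_distrib_chain_left[OF o fb ij wne] p d i k_def n_def by simp
  moreover have "ncomp P (NWord a) (NWord ws) = NWord (map (lwhisk a k) ws)"
    using lt k_def by (simp add: ncomp_NWord_nlwhisk)
  ultimately show ?thesis using i k_def n_def by (simp add: comp_def)
qed

lemma pceq_readback_nrwhisk_words:
  assumes o: "omega_polygraph P" and fb: "faithful_below P N"
    and cA: "nform_ok P (NWord ws)" and cC: "nform_ok P (NWord b)"
    and p: "pcell P (Cmp i (readback P (NWord ws)) (readback P (NWord b)))"
    and d: "pdim P (Cmp i (readback P (NWord ws)) (readback P (NWord b))) \<le> N"
    and gt: "ndim P (NWord b) < ndim P (NWord ws)"
  shows "pceq P (Cmp i (readback P (NWord ws)) (readback P (NWord b))) (readback P (ncomp P (NWord ws) (NWord b)))"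
proof -
  define k where "k = ndim P (NWord b)"
  define n where "n = ndim P (NWord ws)"
  have bne: "b \<noteq> []" and wne: "ws \<noteq> []" and wkw: "word_ok P n ws" using cA cC n_def by auto
  have k1: "1 \<le> k" and i: "i = k - 1" using readback_Cmp_dims[OF o cA cC p] gt k_def by auto
  have ij: "k - 1 < n - 1" using gt k_def n_def k1 by simp
  have "pceq P (Cmp (k-1) (read_whisk w) (cmp_chain (k-1) (map read_whisk b))) (read_whisk (rwhisk b k w))"
    if "w \<in> set ws" "pcell P (Cmp (k-1) (read_whisk w) (cmp_chain (k-1) (map read_whisk b)))"
      "pdim P (Cmp (k-1) (read_whisk w) (cmp_chain (k-1) (map read_whisk b))) \<le> N" for w
  proof -
    have "whisk_ok P w" "Suc (depth w) = n" using wkw that(1) by (auto simp: word_ok_def)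
    then show ?thesis using pceq_read_rwhisk[OF o fb bne k1] that gt k_def n_def by simp
  qed
  then have "pceq P (Cmp (k-1) (cmp_chain (n-1) (map read_whisk ws)) (cmp_chain (k-1) (map read_whisk b)))
      (cmp_chain (n-1) (map (\<lambda>w. read_whisk (rwhisk b k w)) ws))"
    using pceq_distrib_chain_right[OF o fb ij wne] p d i k_def n_def by simp
  moreover have "ncomp P (NWord ws) (NWord b) = NWord (map (rwhisk b k) ws)"
    using gt k_def by (simp add: ncomp_NWord_nrwhisk)
  ultimately show ?thesis using i k_def n_def by (simp add: comp_def)
qed

lemma pceq_readback_ncomp:
  assumes o: "omega_polygraph P" and fb: "faithful_below P N"
  shows "nform_ok P A \<Longrightarrow> nform_ok P C \<Longrightarrow> pcell P (Cmp i (readback P A) (readback P C)) \<Longrightarrow>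
    pdim P (Cmp i (readback P A) (readback P C)) \<le> N \<Longrightarrow>
    pceq P (Cmp i (readback P A) (readback P C)) (readback P (ncomp P A C))"
proof (induction "size A + size C" arbitrary: A C rule: less_induct)
  case less
  note cA = less.prems(1) and cC = less.prems(2) and pd = less.prems(3,4)
  have A0: "0 < ndim P A" and C0: "0 < ndim P C" using readback_Cmp_dims[OF o cA cC pd(1)] by auto
  show ?case
  proof (cases A)
    case (NGen g) then show ?thesis using A0 by simp
  next
    case (NId x)
    show ?thesis
    proof (cases "ndim P A \<le> ndim P C")
      case True
      then show ?thesis using pceq_readback_ncomp_NId_left[OF o fb, of x C i] NId cA cC pd by simp
    next
      case False
      have "pcell P (Cmp i (readback P x) (readback P C)) \<Longrightarrow> pdim P (Cmp i (readback P x) (readback P C)) \<le> N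
          \<Longrightarrow> pceq P (Cmp i (readback P x) (readback P C)) (readback P (ncomp P x C))"
        using less.hyps[of x C] NId cA cC by simp
      then show ?thesis using pceq_readback_ncomp_Idt_left[OF o fb, of x C i] NId cA cC pd False by simp
    qed
  next
    case (NWord a)
    show ?thesis
    proof (cases C)
      case (NGen g) then show ?thesis using C0 by simp
    next
      case (NId y)
      show ?thesis
      proof (cases "ndim P C \<le> ndim P A")
        case True
        then show ?thesis using pceq_readback_ncomp_NId_right[OF o fb, of A y i] NId cA cC pd by simp
      next
        case False
        have "pcell P (Cmp i (readback P A) (readback P y)) \<Longrightarrow> pdim P (Cmp i (readback P A) (readback P y)) \<le> N
            \<Longrightarrow> pceq P (Cmp i (readback P A) (readback P y)) (readback P (ncomp P A y))"
          using less.hyps[of A y] NId cA cC by simp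
        then show ?thesis using pceq_readback_ncomp_Idt_right[OF o fb, of A y i] NId cA cC pd False by simp
      qed
    next
      case (NWord c)
      consider "ndim P A = ndim P C" | "ndim P A < ndim P C" | "ndim P C < ndim P A" by linarith
      then show ?thesis
      proof cases
        case 1
        then show ?thesis using pceq_readback_ncat_words[OF o fb, of a c i] NWord \<open>A = NWord a\<close> cA cC pd
          by simp
      next
        case 2
        then show ?thesis using pceq_readback_nlwhisk_words[OF o fb, of a c i] NWord \<open>A = NWord a\<close> cA cC pd
          by simp
      next
        case 3
        then show ?thesis using pceq_readback_nrwhisk_words[OF o fb, of a c i] NWord \<open>A = NWord a\<close> cA cC pd
          by simp
      qed
    qed
  qed
qed

lemma pceq_readback_nf:
  assumes o: "omega_polygraph P" and fb: "faithful_below P N"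
  shows "pcell P x \<Longrightarrow> pdim P x \<le> N \<Longrightarrow> pceq P x (readback P (nf P x))"
proof (induction x)
  case (Gen g)
  then show ?case by (simp add: pcell_refl read_whisk_pad)
next
  case (Idt u)
  then show ?case using pcell_IdtD[OF o] by (simp add: pceq.idt)
next
  case (Cmp i a c)
  have "pcell P a" "pcell P c" using pcell_CmpD[OF o Cmp.prems(1)] by auto
  then have "pceq P a (readback P (nf P a))" "pceq P c (readback P (nf P c))"
    using Cmp.IH Cmp.prems(2) by auto
  then have e1: "pceq P (Cmp i a c) (Cmp i (readback P (nf P a)) (readback P (nf P c)))"
    by (rule pceq_Cmp_cong[OF o fb Cmp.prems])
  moreover have "pdim P (Cmp i (readback P (nf P a)) (readback P (nf P c))) \<le> N"
    using Cmp.prems(2) by (simp add: pdim_readback[OF nform_ok_nf])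
  ultimately have "pceq P (Cmp i (readback P (nf P a)) (readback P (nf P c))) (readback P (nf P (Cmp i a c)))"
    using pceq_readback_ncomp[OF o fb nform_ok_nf nform_ok_nf pceq_pcell_right[OF e1]] by simp
  then show ?case using pceq.trans[OF e1] by blast
qed

lemma faithful_below_all: "omega_polygraph P \<Longrightarrow> faithful_below P N"
proof (induction N)
  case 0 then show ?case by (simp add: faithful_below_def)
next
  case (Suc N)
  have "pceq P x y" if "pcell P x" "pcell P y" "pdim P x \<le> N" "nf P x = nf P y" for x y
  proof -
    have "pdim P y \<le> N" using that by (metis ndim_nf)
    then show ?thesis using pceq_readback_nf[OF Suc.prems Suc.IH[OF Suc.prems]] that
      by (metis pceq.sym pceq.trans)
  qed
  then show ?case by (simp add: faithful_below_def less_Suc_eq_le)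
qed

lemma nf_faithful:
  assumes o: "omega_polygraph P" and px: "pcell P x" and py: "pcell P y" and e: "nf P x = nf P y"
  shows "pceq P x y"
  using faithful_below_all[OF o, of "Suc (pdim P x)"] px py e by (auto simp: faithful_below_def)

section \<open>Left cancellation\<close>

lemma nform_eqI:
  assumes "nform_ok P V1" "nform_ok P V2" "0 < ndim P V1" "ndim P V1 = ndim P V2"
    and "word V1 = word V2" "nbdj P b (ndim P V1 - 1) V1 = nbdj P b (ndim P V1 - 1) V2"
  shows "V1 = V2"
  using assms by (cases V1; cases V2) (auto simp: nbdj_NId nbdj_triv)

lemma ncat_NWord: "0 < ndim P V \<Longrightarrow> ncat (NWord a) V = NWord (a @ word V)"
  by (cases V) auto

lemma ncat_cancel_left:
  assumes cV1: "nform_ok P V1" and cV2: "nform_ok P V2"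
    and d: "0 < ndim P U" "ndim P U = ndim P V1" "ndim P V1 = ndim P V2"
    and bd: "nbdj P False (ndim P U - 1) V1 = nbdj P False (ndim P U - 1) V2"
    and e: "ncat U V1 = ncat U V2"
  shows "V1 = V2"
proof (cases U)
  case (NGen g) then show ?thesis using d by simp
next
  case (NId x) then show ?thesis using e by simp
next
  case (NWord a)
  then have "word V1 = word V2" using e d ncat_NWord[of P V1 a] ncat_NWord[of P V2 a] by simp
  then show ?thesis using nform_eqI[OF cV1 cV2] d bd by simp
qed

lemma nlwhisk_cancel_left:
  assumes cV1: "nform_ok P V1" and cV2: "nform_ok P V2"
    and d: "0 < ndim P U" "ndim P U < ndim P V1" "ndim P V1 = ndim P V2"
    and bd: "nbdj P False (ndim P U - 1) V1 = nbdj P False (ndim P U - 1) V2"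
    and e: "nlwhisk P U V1 = nlwhisk P U V2"
    and IH: "\<And>y1 y2. V1 = NId y1 \<Longrightarrow> V2 = NId y2 \<Longrightarrow> ncomp P U y1 = ncomp P U y2 \<Longrightarrow>
      nbdj P False (ndim P U - 1) y1 = nbdj P False (ndim P U - 1) y2 \<Longrightarrow> y1 = y2"
  shows "V1 = V2"
proof (cases U)
  case (NGen g) then show ?thesis using d by simp
next
  case (NId x) then show ?thesis using e by simp
next
  case (NWord a)
  show ?thesis
  proof (cases V1)
    case (NGen g) then show ?thesis using d by simp
  next
    case (NId y1)
    then obtain y2 where y2: "V2 = NId y2" using e NWord by (cases V2) auto
    have "ncomp P U y1 = ncomp P U y2"
      using e d NId y2 by (simp add: ncomp_def split: if_splits)
    moreover have "nbdj P False (ndim P U - 1) y1 = nbdj P False (ndim P U - 1) y2"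
      using bd d NId y2 by (simp add: nbdj_NId)
    ultimately show ?thesis using IH NId y2 by simp
  next
    case (NWord ws1)
    then obtain ws2 where ws2: "V2 = NWord ws2" using e \<open>U = NWord a\<close> by (cases V2) auto
    then have "map (lwhisk a (ndim P U)) ws1 = map (lwhisk a (ndim P U)) ws2"
      using e \<open>U = NWord a\<close> NWord by simp
    then have "ws1 = ws2" by (rule map_eq_map_imp_eq[rotated]) (use lwhisk_inj in blast)
    then show ?thesis using NWord ws2 by simp
  qed
qed

lemma nrwhisk_cancel_left:
  assumes cU: "nform_ok P U" and cV1: "nform_ok P V1" and cV2: "nform_ok P V2"
    and d: "0 < ndim P V1" "ndim P V1 < ndim P U" "ndim P V1 = ndim P V2"
    and bd: "nbdj P False (ndim P V1 - 1) V1 = nbdj P False (ndim P V1 - 1) V2"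
    and e: "ncomp P U V1 = ncomp P U V2"
    and IH: "\<And>x. U = NId x \<Longrightarrow> ncomp P x V1 = ncomp P x V2 \<Longrightarrow> V1 = V2"
  shows "V1 = V2"
proof (cases U)
  case (NGen g) then show ?thesis using d by simp
next
  case (NId x)
  then show ?thesis using IH e d by (simp add: ncomp_NId_left_nrwhisk)
next
  case (NWord ws)
  obtain w ws' where ws: "ws = w # ws'" using cU NWord by (cases ws) auto
  then have dw: "Suc (depth w) = ndim P U" using cU NWord by (auto simp: word_ok_def)
  have eq: "rwhisk (word V1) (ndim P V1) w = rwhisk (word V2) (ndim P V1) w"
    using e d NWord ws by (simp add: ncomp_def)
  have "word V1 = word V2" using rwhisk_inj_word[OF eq] d dw by simp
  then show ?thesis using nform_eqI[OF cV1 cV2] d bd by simp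
qed

lemma ncomp_cancel_left:
  "nform_ok P U \<Longrightarrow> nform_ok P V1 \<Longrightarrow> nform_ok P V2 \<Longrightarrow> 0 < ndim P U \<Longrightarrow> 0 < ndim P V1 \<Longrightarrow>
    ndim P V1 = ndim P V2 \<Longrightarrow> i = min (ndim P U) (ndim P V1) - 1 \<Longrightarrow>
    nbdj P False i V1 = nbdj P False i V2 \<Longrightarrow> ncomp P U V1 = ncomp P U V2 \<Longrightarrow> V1 = V2"
proof (induction "size U + size V1" arbitrary: U V1 V2 rule: less_induct)
  case less
  note cU = less.prems(1) and cV1 = less.prems(2) and cV2 = less.prems(3) and dU = less.prems(4)
    and dV1 = less.prems(5) and dV = less.prems(6) and i = less.prems(7) and bd = less.prems(8)
    and e = less.prems(9)
  consider (eq) "ndim P U = ndim P V1" | (lt) "ndim P U < ndim P V1" | (gt) "ndim P V1 < ndim P U"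
    by linarith
  then show ?case
  proof cases
    case eq
    have bd': "nbdj P False (ndim P U - 1) V1 = nbdj P False (ndim P U - 1) V2" using bd i eq by simp
    have "ncat U V1 = ncat U V2" using e eq dV by (simp add: ncomp_def)
    then show ?thesis by (rule ncat_cancel_left[OF cV1 cV2 dU eq dV bd'])
  next
    case lt
    have bd': "nbdj P False (ndim P U - 1) V1 = nbdj P False (ndim P U - 1) V2" using bd i lt by simp
    have IH: "y1 = y2" if y: "V1 = NId y1" "V2 = NId y2" and ey: "ncomp P U y1 = ncomp P U y2"
      and yb: "nbdj P False (ndim P U - 1) y1 = nbdj P False (ndim P U - 1) y2" for y1 y2
      by (rule less.hyps[of U y1 y2]) (use y cU cV1 cV2 dU lt dV i ey yb in auto)
    have "nlwhisk P U V1 = nlwhisk P U V2" using e lt dV by (simp add: ncomp_def)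
    then show ?thesis by (rule nlwhisk_cancel_left[OF cV1 cV2 dU lt dV bd' _ IH])
  next
    case gt
    have bd': "nbdj P False (ndim P V1 - 1) V1 = nbdj P False (ndim P V1 - 1) V2" using bd i gt by simp
    have IH: "V1 = V2" if x: "U = NId x" and ex: "ncomp P x V1 = ncomp P x V2" for x
      by (rule less.hyps[of x V1 V2]) (use x cU cV1 cV2 dV1 dV i bd ex gt in \<open>auto simp: min_def\<close>)
    show ?thesis by (rule nrwhisk_cancel_left[OF cU cV1 cV2 dV1 gt dV bd' e IH])
  qed
qed

theorem proposition2p4:
  fixes P :: "('g, 'x) polygraph_scheme"
  assumes "omega_polygraph P"
    and "pcell P u" and "pcell P v1" and "pcell P v2"
    and "pcell P (Cmp i u v1)" and "pcell P (Cmp i u v2)"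
    and "pceq P (Cmp i u v1) (Cmp i u v2)"
  shows "pceq P v1 v2"
proof -
  note o = assms(1)
  have w1: "wf_term P (Cmp i u v1)" and w2: "wf_term P (Cmp i u v2)"
    using pcell_wf_term[OF o assms(5)] pcell_wf_term[OF o assms(6)] .
  have e: "ncomp P (nf P u) (nf P v1) = ncomp P (nf P u) (nf P v2)"
    using pceq_nf(1)[OF o assms(7)] by simp
  have "max (pdim P u) (pdim P v1) = max (pdim P u) (pdim P v2)"
    using arg_cong[OF e, of "ndim P"] by simp
  moreover have "min (pdim P u) (pdim P v1) = min (pdim P u) (pdim P v2)"
    using w1 w2 by (auto simp: comp_dims_def)
  ultimately have dv: "pdim P v1 = pdim P v2" by (simp add: min_def max_def split: if_splits)
  have c: "nbdj P False i (nf P v1) = nbdj P False i (nf P v2)" using w1 w2 by simp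
  have d: "0 < ndim P (nf P u)" "0 < ndim P (nf P v1)" "i = min (ndim P (nf P u)) (ndim P (nf P v1)) - 1"
    using w1 by (simp_all add: comp_dims_def)
  have "nf P v1 = nf P v2"
    by (rule ncomp_cancel_left[OF nform_ok_nf nform_ok_nf nform_ok_nf d(1,2) _ d(3) c e]) (simp add: dv)
  then show ?thesis by (rule nf_faithful[OF o assms(3,4)])
qed

end
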